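(* In the setting described in the context, suppose $T$ is irreducible, $A$ is irreducible, $\rho<1$, $r_A>1$, and there is a finite $\theta$ with $1<\theta<r_A$ and $\theta=\delta(A^*(\theta))$. Then $R:=R^*(1)$ is irreducible, or, after a simultaneous permutation of rows and columns, it takes the form \[ R=\begin{pmatrix}R_1&R_{1,\bullet}\\ O&R_\bullet\end{pmatrix}, \] where $R_1$ is irreducible and $R_\bullet$ is strictly upper triangular.
   Context: Let $M_0,M$ be positive integers. Consider a discrete-time Markov chain $\{(X_n,S_n)\}_{n\ge0}$ of M/G/1 type with state space $\{(0,j):1\le j\le M_0\}\cup\{(k,j):k\ge1,1\le j\le M\}$ (level $k$ = states with first coordinate $k$), with transition matrix in lexicographic order \[ T=\begin{pmatrix}B(0)&B(1)&B(2)&\cdots\\ C(0)&A(1)&A(2)&\cdots\\ O&A(0)&A(1)&\cdots\\ O&O&A(0)&\cdots\\ \vdots&\vdots&\vdots&\ddots\end{pmatrix}, \] with nonnegative blocks $A(k)$ ($M\times M$), $B(0)$, $B(k)$ ($k\ge1$), $C(0)$ of compatible sizes; $A=\sum_{k\ge0}A(k)$ stochastic, $B(0)e+\sum_{k\ge1}B(k)e=e$; $\pi A=\pi$, $\pi e=1$, $\rho=\pi\sum_{k\ge1}kA(k)e$. $A^*(z)=\sum_{k\ge0}z^kA(k)$ with convergence radius $r_A$. For a square complex matrix $X$, $\delta(X)$ is a maximum-modulus eigenvalue with nonnegative argument and maximal real part among maximum-modulus eigenvalues (Perron–Frobenius eigenvalue for nonnegative irreducible $X$). $G$ is the $M\times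 M$ matrix with $[G]_{i,j}=\Pr[S_{a(k)}=j\mid X_0=k+1,S_0=i]$ ($a(k)=\inf\{n\ge1:X_n=k\}$). $U(k)=\sum_{m\ge k+1}A(m)G^{m-k-1}$ ($k\ge0$), $R(k)=U(k)(I-U(0))^{-1}$ ($k\ge1$), $R^*(z)=\sum_{k\ge1}z^kR(k)$. *)

theory Defs
  imports "HOL-Analysis.Analysis" "Jordan_Normal_Form.Spectral_Radius"
    "Jordan_Normal_Form.Gauss_Jordan_Elimination"
begin

text \<open>Matrices are Jordan_Normal_Form matrices with real entries, indices 0..n-1.
  Phases 1..M of the paper correspond to indices 0..M-1.\<close>

definition irred :: "nat \<Rightarrow> (nat \<Rightarrow> nat \<Rightarrow> real) \<Rightarrow> bool" where
  "irred n f \<longleftrightarrow>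
     (\<forall>i<n. \<forall>j<n. (i, j) \<in> {(a, b). a < n \<and> b < n \<and> f a b > 0}\<^sup>+)"

definition irred_mat :: "real mat \<Rightarrow> bool" where
  "irred_mat X \<longleftrightarrow> irred (dim_row X) (\<lambda>i j. X $$ (i, j))"

definition msuminf :: "nat \<Rightarrow> (nat \<Rightarrow> real mat) \<Rightarrow> real mat" where
  "msuminf M F = mat M M (\<lambda>(i, j). \<Sum>k. F k $$ (i, j))"

definition Astar :: "nat \<Rightarrow> (nat \<Rightarrow> real mat) \<Rightarrow> real \<Rightarrow> real mat" where
  "Astar M A z = msuminf M (\<lambda>k. z ^ k \<cdot>\<^sub>m A k)"

definition conv_radius_A :: "nat \<Rightarrow> (nat \<Rightarrow> real mat) \<Rightarrow> ereal" where
  "conv_radius_A M A = (INF ij \<in> {..<M} \<times> {..<M}. conv_radius (\<lambda>k. A k $$ ij))"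

definition delta :: "complex mat \<Rightarrow> complex" where
  "delta X = (let S = {e \<in> spectrum X. cmod e = spectral_radius X \<and> Arg e \<ge> 0}
              in THE e. e \<in> S \<and> (\<forall>u\<in>S. Re u \<le> Re e))"

text \<open>The transition matrix T of the M/G/1-type chain; states are pairs (level, phase),
  state space {(0,j). j < M0} \<union> {(k,j). k \<ge> 1, j < M}.\<close>
definition states :: "nat \<Rightarrow> nat \<Rightarrow> (nat \<times> nat) set" where
  "states M0 M = {(0, j) | j. j < M0} \<union> {(k, j) | k j. 1 \<le> k \<and> j < M}"

fun Tmat :: "(nat \<Rightarrow> real mat) \<Rightarrow> (nat \<Rightarrow> real mat) \<Rightarrow> real mat
              \<Rightarrow> nat \<times> nat \<Rightarrow> nat \<times> nat \<Rightarrow> real" where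
  "Tmat A B C0 (k, i) (l, j) =
     (if k = 0 then B l $$ (i, j)
      else if k = 1 then (if l = 0 then C0 $$ (i, j) else A l $$ (i, j))
      else if k - 1 \<le> l then A (l + 1 - k) $$ (i, j) else 0)"

definition irred_T :: "nat \<Rightarrow> nat \<Rightarrow> (nat \<times> nat \<Rightarrow> nat \<times> nat \<Rightarrow> real) \<Rightarrow> bool" where
  "irred_T M0 M T \<longleftrightarrow>
     (\<forall>s\<in>states M0 M. \<forall>t\<in>states M0 M.
        (s, t) \<in> {(a, b). a \<in> states M0 M \<and> b \<in> states M0 M \<and> T a b > 0}\<^sup>+)"

text \<open>First-passage probabilities: hit M A n l i j is the probability that the chain,
  started at a level k+l (k \<ge> 1, l \<ge> 1) in phase i, enters level k for the first
  time at step n, in phase j. Before that time only the blocks A(m) are used.\<close>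
primrec hit :: "nat \<Rightarrow> (nat \<Rightarrow> real mat) \<Rightarrow> nat \<Rightarrow> nat \<Rightarrow> nat \<Rightarrow> nat \<Rightarrow> real" where
  "hit M A 0 l i j = 0"
| "hit M A (Suc n) l i j =
     (if l = 1 \<and> n = 0 then A 0 $$ (i, j) else 0)
     + (\<Sum>m. \<Sum>i'<M. if 2 \<le> l + m then A m $$ (i, i') * hit M A n (l + m - 1) i' j else 0)"

definition Gmat :: "nat \<Rightarrow> (nat \<Rightarrow> real mat) \<Rightarrow> real mat" where
  "Gmat M A = mat M M (\<lambda>(i, j). \<Sum>n. hit M A n 1 i j)"

definition Umat :: "nat \<Rightarrow> (nat \<Rightarrow> real mat) \<Rightarrow> nat \<Rightarrow> real mat" where
  "Umat M A k = msuminf M (\<lambda>m. A (m + k + 1) * (Gmat M A ^\<^sub>m m))"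

definition Rmat :: "nat \<Rightarrow> (nat \<Rightarrow> real mat) \<Rightarrow> nat \<Rightarrow> real mat" where
  "Rmat M A k = Umat M A k * the (mat_inverse (1\<^sub>m M - Umat M A 0))"

definition Rstar1 :: "nat \<Rightarrow> (nat \<Rightarrow> real mat) \<Rightarrow> real mat" where
  "Rstar1 M A = msuminf M (\<lambda>k. Rmat M A (Suc k))"

end

theory Submission
  imports Defs
begin

(* The positive entries of R = R^*(1) are the steps R(k)_{ab} > 0 from phase a to phase b
   with a level gain k >= 1. Irreducibility of T makes U(0) transient, so (I - U(0))^{-1} is
   its Neumann series and the positivity pattern of R(k) = U(k) (I - U(0))^{-1} is explicit.
   A phase lying on a cycle of the graph of R reaches every phase: running around the cycle
   often enough gains as many levels as needed to follow any path of the irreducible phase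
   process A, each transition of which costs at most one level. Hence the cyclic phases form
   a closed irreducible class, and the remaining phases can be numbered topologically.

   If there were no cyclic phase, the level gains of R-paths would be bounded, and the
   largest gain phi(q) of a path ending in phase q would satisfy m + phi(p) <= phi(q) + 1
   whenever A(m)_{pq} > 0. Weighting the moduli of an eigenvector of A^*(theta) for theta by
   theta^phi then gives a subinvariant, hence constant, vector of the irreducible stochastic
   matrix A; so equality holds on every transition, and the mean drift rho equals 1. *)

lemma sum_pos_iff_ex_pos:
  fixes f :: "'a \<Rightarrow> real"
  assumes "finite I" "\<And>i. i \<in> I \<Longrightarrow> 0 \<le> f i"
  shows "0 < sum f I \<longleftrightarrow> (\<exists>i\<in>I. 0 < f i)"
proof -
  have "0 \<le> sum f I" using assms(2) by (rule sum_nonneg)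
  thus ?thesis using sum_nonneg_eq_0_iff[OF assms] assms(2) by force
qed

lemma sum_lessThan_mult_div:
  fixes g :: "nat \<Rightarrow> real"
  assumes "0 < T"
  shows "(\<Sum>t<T * J. g (t div T)) = real T * (\<Sum>j<J. g j)"
proof (induction J)
  case (Suc J)
  have "(\<Sum>t<T * Suc J. g (t div T)) = (\<Sum>t<T * J. g (t div T)) + (\<Sum>t\<in>{T * J..<T * J + T}. g (t div T))"
    unfolding atLeast0LessThan[symmetric] by (subst sum.atLeastLessThan_concat[symmetric]) (auto simp: algebra_simps)
  also have "(\<Sum>t\<in>{T * J..<T * J + T}. g (t div T)) = (\<Sum>t\<in>{T * J..<T * J + T}. g J)"
    using assms by (intro sum.cong refl) (auto intro!: arg_cong[of _ _ g] div_nat_eqI simp: algebra_simps)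
  finally show ?case using Suc by (simp add: algebra_simps)
qed simp

lemma mult_nonneg_pos_iff:
  fixes a b :: real
  assumes "0 \<le> a" "0 \<le> b"
  shows "0 < a * b \<longleftrightarrow> 0 < a \<and> 0 < b"
  using assms by (auto simp: zero_less_mult_iff)

subsection \<open>Nonnegative square matrices\<close>

lemma index_mult_mat_square:
  fixes X Y :: "'a::comm_semiring_0 mat"
  assumes "X \<in> carrier_mat n n" "Y \<in> carrier_mat n n" "i < n" "j < n"
  shows "(X * Y) $$ (i, j) = (\<Sum>k<n. X $$ (i, k) * Y $$ (k, j))"
  using assms by (simp add: scalar_prod_def atLeast0LessThan)

lemma mult_mat_pos_iff:
  fixes X Y :: "real mat"
  assumes "X \<in> carrier_mat n n" "Y \<in> carrier_mat n n" "i < n" "j < n"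
    and "\<And>a b. a < n \<Longrightarrow> b < n \<Longrightarrow> 0 \<le> X $$ (a, b)"
    and "\<And>a b. a < n \<Longrightarrow> b < n \<Longrightarrow> 0 \<le> Y $$ (a, b)"
  shows "0 < (X * Y) $$ (i, j) \<longleftrightarrow> (\<exists>k<n. 0 < X $$ (i, k) \<and> 0 < Y $$ (k, j))"
proof -
  have "0 < (X * Y) $$ (i, j) \<longleftrightarrow> (\<exists>k\<in>{..<n}. 0 < X $$ (i, k) * Y $$ (k, j))"
    unfolding index_mult_mat_square[OF assms(1-4)] using assms
    by (intro sum_pos_iff_ex_pos) auto
  also have "\<dots> \<longleftrightarrow> (\<exists>k<n. 0 < X $$ (i, k) \<and> 0 < Y $$ (k, j))"
    using assms by (auto simp: mult_nonneg_pos_iff)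
  finally show ?thesis .
qed

lemma pow_mat_add:
  assumes "X \<in> carrier_mat n n"
  shows "X ^\<^sub>m (s + t) = X ^\<^sub>m s * X ^\<^sub>m t"
proof (induction t)
  case (Suc t)
  have "X ^\<^sub>m (s + Suc t) = (X ^\<^sub>m s * X ^\<^sub>m t) * X" using Suc by simp
  also have "\<dots> = X ^\<^sub>m s * (X ^\<^sub>m t * X)" using assms by (intro assoc_mult_mat) auto
  finally show ?case by simp
qed (use assms in simp)

lemma pow_mat_Suc_left:
  assumes "X \<in> carrier_mat n n"
  shows "X ^\<^sub>m Suc t = X * X ^\<^sub>m t"
  using pow_mat_add[OF assms, of 1 t] assms by simp

definition row_sum :: "nat \<Rightarrow> real mat \<Rightarrow> nat \<Rightarrow> real" where
  "row_sum n X i = (\<Sum>j<n. X $$ (i, j))"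

definition substochastic :: "nat \<Rightarrow> real mat \<Rightarrow> bool" where
  "substochastic n X \<longleftrightarrow> X \<in> carrier_mat n n \<and> (\<forall>i<n. \<forall>j<n. 0 \<le> X $$ (i, j))
     \<and> (\<forall>i<n. row_sum n X i \<le> 1)"

definition pos_graph :: "nat \<Rightarrow> real mat \<Rightarrow> (nat \<times> nat) set" where
  "pos_graph n X = {(i, j). i < n \<and> j < n \<and> 0 < X $$ (i, j)}"

lemma irred_mat_iff_pos_graph:
  "X \<in> carrier_mat n n \<Longrightarrow> irred_mat X \<longleftrightarrow> (\<forall>i<n. \<forall>j<n. (i, j) \<in> (pos_graph n X)\<^sup>+)"
  unfolding irred_mat_def irred_def pos_graph_def by simp

lemma row_sum_mult:
  assumes "X \<in> carrier_mat n n" "Y \<in> carrier_mat n n" "i < n"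
  shows "row_sum n (X * Y) i = (\<Sum>k<n. X $$ (i, k) * row_sum n Y k)"
proof -
  have "row_sum n (X * Y) i = (\<Sum>j<n. \<Sum>k<n. X $$ (i, k) * Y $$ (k, j))"
    unfolding row_sum_def using assms by (intro sum.cong refl index_mult_mat_square) auto
  also have "\<dots> = (\<Sum>k<n. X $$ (i, k) * row_sum n Y k)"
    unfolding row_sum_def sum_distrib_left by (rule sum.swap)
  finally show ?thesis .
qed

lemma substochastic_entry:
  assumes "substochastic n X" "i < n" "j < n"
  shows "0 \<le> X $$ (i, j)" "X $$ (i, j) \<le> 1"
proof -
  have "X $$ (i, j) \<le> row_sum n X i"
    using assms unfolding row_sum_def substochastic_def by (intro member_le_sum) auto
  thus "0 \<le> X $$ (i, j)" "X $$ (i, j) \<le> 1" using assms unfolding substochastic_def by auto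
qed

lemma row_sum_mult_le:
  assumes "X \<in> carrier_mat n n" "Y \<in> carrier_mat n n" "i < n"
    and "\<And>k. k < n \<Longrightarrow> 0 \<le> X $$ (i, k)" "\<And>k. k < n \<Longrightarrow> row_sum n Y k \<le> c"
  shows "row_sum n (X * Y) i \<le> row_sum n X i * c"
proof -
  have "row_sum n (X * Y) i \<le> (\<Sum>k<n. X $$ (i, k) * c)"
    unfolding row_sum_mult[OF assms(1-3)] using assms(4,5) by (intro sum_mono mult_left_mono) auto
  also have "\<dots> = row_sum n X i * c" unfolding row_sum_def by (simp add: sum_distrib_right)
  finally show ?thesis .
qed

lemma substochastic_mult:
  assumes "substochastic n X" "substochastic n Y"
  shows "substochastic n (X * Y)"
proof -
  have XY: "X \<in> carrier_mat n n" "Y \<in> carrier_mat n n" using assms unfolding substochastic_def by auto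
  have "0 \<le> (X * Y) $$ (i, j)" if "i < n" "j < n" for i j
    unfolding index_mult_mat_square[OF XY that] using assms that
    by (intro sum_nonneg mult_nonneg_nonneg) (auto simp: substochastic_def)
  moreover have "row_sum n (X * Y) i \<le> 1" if "i < n" for i
    using row_sum_mult_le[OF XY that, of 1] assms that unfolding substochastic_def by force
  ultimately show ?thesis using XY unfolding substochastic_def by auto
qed

lemma substochastic_one: "substochastic n (1\<^sub>m n)"
proof -
  have "row_sum n (1\<^sub>m n) i = (\<Sum>j<n. if i = j then 1 else 0)" if "i < n" for i
    unfolding row_sum_def using that by (intro sum.cong refl) auto
  thus ?thesis unfolding substochastic_def by auto
qed

lemma substochastic_pow: "substochastic n X \<Longrightarrow> substochastic n (X ^\<^sub>m k)"
proof (induction k)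
  case 0
  then show ?case using substochastic_one[of n] unfolding substochastic_def by auto
qed (simp add: substochastic_mult)

subsection \<open>Transient substochastic matrices\<close>

locale transient_substochastic =
  fixes n :: nat and Q :: "real mat"
  assumes substochastic: "substochastic n Q"
    and reaches_deficient_row: "\<And>a. a < n \<Longrightarrow> \<exists>q. (a, q) \<in> (pos_graph n Q)\<^sup>* \<and> row_sum n Q q < 1"
begin

lemma carrier: "Q \<in> carrier_mat n n"
  using substochastic unfolding substochastic_def by simp

lemma pow_substochastic: "substochastic n (Q ^\<^sub>m t)"
  using substochastic_pow[OF substochastic] .

lemma pow_entry_nonneg: "i < n \<Longrightarrow> j < n \<Longrightarrow> 0 \<le> (Q ^\<^sub>m t) $$ (i, j)"
  using substochastic_entry[OF pow_substochastic] by blast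

lemma pow_mult_pos_iff:
  "i < n \<Longrightarrow> j < n \<Longrightarrow> 0 < (Q ^\<^sub>m Suc t) $$ (i, j) \<longleftrightarrow> (\<exists>k<n. 0 < (Q ^\<^sub>m t) $$ (i, k) \<and> 0 < Q $$ (k, j))"
  using mult_mat_pos_iff[OF pow_carrier_mat[OF carrier] carrier] pow_entry_nonneg
    substochastic_entry[OF substochastic] by simp

lemma pow_pos_iff_rtrancl:
  assumes "i < n" "j < n"
  shows "(\<exists>t. 0 < (Q ^\<^sub>m t) $$ (i, j)) \<longleftrightarrow> (i, j) \<in> (pos_graph n Q)\<^sup>*"
proof
  assume "\<exists>t. 0 < (Q ^\<^sub>m t) $$ (i, j)"
  then obtain t where "0 < (Q ^\<^sub>m t) $$ (i, j)" by blast
  thus "(i, j) \<in> (pos_graph n Q)\<^sup>*" using assms(2)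
  proof (induction t arbitrary: j)
    case 0
    then show ?case using carrier assms(1) by (auto split: if_splits)
  next
    case (Suc t)
    then obtain k where k: "k < n" "0 < (Q ^\<^sub>m t) $$ (i, k)" "0 < Q $$ (k, j)"
      using pow_mult_pos_iff[OF assms(1)] by blast
    hence "(i, k) \<in> (pos_graph n Q)\<^sup>*" using Suc.IH by blast
    moreover have "(k, j) \<in> pos_graph n Q" using k Suc.prems unfolding pos_graph_def by simp
    ultimately show ?case by simp
  qed
next
  assume "(i, j) \<in> (pos_graph n Q)\<^sup>*"
  then obtain t where "(i, j) \<in> pos_graph n Q ^^ t" using rtrancl_power by blast
  hence "0 < (Q ^\<^sub>m t) $$ (i, j)" using assms
  proof (induction t arbitrary: j)
    case 0
    then show ?case using carrier by simp
  next
    case (Suc t)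
    then obtain k where "(i, k) \<in> pos_graph n Q ^^ t" "(k, j) \<in> pos_graph n Q" by auto
    with Suc show ?case unfolding pos_graph_def using pow_mult_pos_iff[OF assms(1)] by auto
  qed
  thus "\<exists>t. 0 < (Q ^\<^sub>m t) $$ (i, j)" ..
qed

lemma row_sum_pow_le: "a < n \<Longrightarrow> row_sum n (Q ^\<^sub>m (s + d)) a \<le> row_sum n (Q ^\<^sub>m s) a"
proof (induction d)
  case (Suc d)
  have "row_sum n (Q ^\<^sub>m (s + d) * Q) a \<le> row_sum n (Q ^\<^sub>m (s + d)) a * 1"
    using Suc.prems pow_entry_nonneg substochastic
    by (intro row_sum_mult_le[OF pow_carrier_mat[OF carrier] carrier]) (auto simp: substochastic_def)
  thus ?case using Suc by simp
qed simp

lemma row_sum_pow_deficient: "a < n \<Longrightarrow> \<exists>t. row_sum n (Q ^\<^sub>m Suc t) a < 1"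
proof -
  assume a: "a < n"
  obtain q where q: "(a, q) \<in> (pos_graph n Q)\<^sup>*" "row_sum n Q q < 1"
    using reaches_deficient_row[OF a] by blast
  have "q < n" using q(1) a by (cases rule: rtranclE) (auto simp: pos_graph_def)
  obtain t where pos: "0 < (Q ^\<^sub>m t) $$ (a, q)" using pow_pos_iff_rtrancl[OF a \<open>q < n\<close>] q(1) by blast
  have "row_sum n (Q ^\<^sub>m Suc t) a = (\<Sum>k<n. (Q ^\<^sub>m t) $$ (a, k) * row_sum n Q k)"
    using row_sum_mult[OF pow_carrier_mat[OF carrier] carrier a] by simp
  also have "\<dots> = row_sum n (Q ^\<^sub>m t) a - (\<Sum>k<n. (Q ^\<^sub>m t) $$ (a, k) * (1 - row_sum n Q k))"
    unfolding row_sum_def by (simp add: algebra_simps sum_subtractf)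
  moreover have "(Q ^\<^sub>m t) $$ (a, q) * (1 - row_sum n Q q) \<le> (\<Sum>k<n. (Q ^\<^sub>m t) $$ (a, k) * (1 - row_sum n Q k))"
    using \<open>q < n\<close> a pow_entry_nonneg substochastic unfolding substochastic_def
    by (intro member_le_sum[of q "{..<n}" "\<lambda>k. (Q ^\<^sub>m t) $$ (a, k) * (1 - row_sum n Q k)"]) auto
  moreover have "0 < (Q ^\<^sub>m t) $$ (a, q) * (1 - row_sum n Q q)" using pos q(2) by simp
  ultimately have "row_sum n (Q ^\<^sub>m Suc t) a < row_sum n (Q ^\<^sub>m t) a" by linarith
  also have "\<dots> \<le> 1" using pow_substochastic a unfolding substochastic_def by simp
  finally show ?thesis by blast
qed

lemma row_sum_pow_uniformly_deficient: "\<exists>T. 0 < T \<and> (\<forall>a<n. row_sum n (Q ^\<^sub>m T) a < 1)"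
proof -
  define tf where "tf a = (SOME t. row_sum n (Q ^\<^sub>m Suc t) a < 1)" for a
  have tf: "row_sum n (Q ^\<^sub>m Suc (tf a)) a < 1" if "a < n" for a
    unfolding tf_def using row_sum_pow_deficient[OF that] by (rule someI_ex)
  define T where "T = Suc (Max (insert 0 (tf ` {..<n})))"
  have "row_sum n (Q ^\<^sub>m T) a < 1" if a: "a < n" for a
  proof -
    have "tf a \<le> Max (insert 0 (tf ` {..<n}))" using a by (intro Max_ge) auto
    then obtain d where "T = Suc (tf a) + d" unfolding T_def using le_Suc_ex by fastforce
    thus ?thesis using row_sum_pow_le[OF a, of "Suc (tf a)" d] tf[OF a] by simp
  qed
  thus ?thesis unfolding T_def by blast
qed

lemma pow_entry_geometric_bound:
  "\<exists>T \<delta>. 0 < T \<and> 0 \<le> \<delta> \<and> \<delta> < 1 \<and> (\<forall>t i j. i < n \<longrightarrow> j < n \<longrightarrow> (Q ^\<^sub>m t) $$ (i, j) \<le> \<delta> ^ (t div T))"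
proof -
  obtain T where T: "0 < T" "\<And>a. a < n \<Longrightarrow> row_sum n (Q ^\<^sub>m T) a < 1"
    using row_sum_pow_uniformly_deficient by blast
  define \<delta> where "\<delta> = Max (insert 0 (row_sum n (Q ^\<^sub>m T) ` {..<n}))"
  have \<delta>: "0 \<le> \<delta>" "\<delta> < 1" "\<And>a. a < n \<Longrightarrow> row_sum n (Q ^\<^sub>m T) a \<le> \<delta>"
    unfolding \<delta>_def using T(2) by (auto intro: Max_ge simp: Max_less_iff)
  have row: "row_sum n (Q ^\<^sub>m t) a \<le> \<delta> ^ (t div T)" if "a < n" for t a
    using that
  proof (induction t arbitrary: a rule: less_induct)
    case (less t)
    show ?case
    proof (cases "t < T")
      case True
      thus ?thesis using pow_substochastic less.prems unfolding substochastic_def by simp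
    next
      case False
      then obtain s where t: "t = T + s" by (metis le_add_diff_inverse not_less)
      have "row_sum n (Q ^\<^sub>m T * Q ^\<^sub>m s) a \<le> row_sum n (Q ^\<^sub>m T) a * \<delta> ^ (s div T)"
        using less T(1) pow_entry_nonneg by (intro row_sum_mult_le[OF pow_carrier_mat[OF carrier]
              pow_carrier_mat[OF carrier]]) (auto simp: t)
      also have "\<dots> \<le> \<delta> * \<delta> ^ (s div T)" using \<delta> less.prems by (intro mult_right_mono) auto
      finally show ?thesis using T(1) unfolding t pow_mat_add[OF carrier] by simp
    qed
  qed
  have "(Q ^\<^sub>m t) $$ (i, j) \<le> \<delta> ^ (t div T)" if "i < n" "j < n" for t i j
  proof -
    have "(Q ^\<^sub>m t) $$ (i, j) \<le> row_sum n (Q ^\<^sub>m t) i"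
      unfolding row_sum_def using that pow_entry_nonneg by (intro member_le_sum) auto
    thus ?thesis using row[OF that(1), of t] by linarith
  qed
  thus ?thesis using T(1) \<delta> by blast
qed

lemma summable_pow_entry: "i < n \<Longrightarrow> j < n \<Longrightarrow> summable (\<lambda>t. (Q ^\<^sub>m t) $$ (i, j))"
proof -
  assume ij: "i < n" "j < n"
  obtain T \<delta> where T: "0 < T" "0 \<le> \<delta>" "\<delta> < 1" "\<And>t. (Q ^\<^sub>m t) $$ (i, j) \<le> \<delta> ^ (t div T)"
    using pow_entry_geometric_bound ij by blast
  show ?thesis
  proof (rule summableI_nonneg_bounded[where x = "real T / (1 - \<delta>)"])
    show "0 \<le> (Q ^\<^sub>m t) $$ (i, j)" for t using pow_entry_nonneg ij .
    show "(\<Sum>t<N. (Q ^\<^sub>m t) $$ (i, j)) \<le> real T / (1 - \<delta>)" for N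
    proof -
      have "(\<Sum>t<N. (Q ^\<^sub>m t) $$ (i, j)) \<le> (\<Sum>t<T * N. (Q ^\<^sub>m t) $$ (i, j))"
        using T(1) pow_entry_nonneg ij by (intro sum_mono2) auto
      also have "\<dots> \<le> (\<Sum>t<T * N. \<delta> ^ (t div T))" using T(4) by (intro sum_mono) auto
      also have "\<dots> = real T * (\<Sum>t<N. \<delta> ^ t)" using sum_lessThan_mult_div[OF T(1)] .
      also have "(\<Sum>t<N. \<delta> ^ t) \<le> 1 / (1 - \<delta>)"
        using T(2,3) sum_le_suminf[OF summable_geometric, of \<delta> "{..<N}"] suminf_geometric[of \<delta>] by simp
      finally show ?thesis using T(1) by (simp add: divide_simps)
    qed
  qed
qed

definition fundamental :: "real mat" where
  "fundamental = mat n n (\<lambda>(i, j). \<Sum>t. (Q ^\<^sub>m t) $$ (i, j))"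

lemma fundamental_carrier: "fundamental \<in> carrier_mat n n"
  unfolding fundamental_def by simp

lemma index_fundamental: "i < n \<Longrightarrow> j < n \<Longrightarrow> fundamental $$ (i, j) = (\<Sum>t. (Q ^\<^sub>m t) $$ (i, j))"
  unfolding fundamental_def by simp

lemma fundamental_nonneg: "i < n \<Longrightarrow> j < n \<Longrightarrow> 0 \<le> fundamental $$ (i, j)"
  unfolding index_fundamental using summable_pow_entry pow_entry_nonneg by (intro suminf_nonneg) auto

lemma fundamental_pos_iff:
  "i < n \<Longrightarrow> j < n \<Longrightarrow> 0 < fundamental $$ (i, j) \<longleftrightarrow> (i, j) \<in> (pos_graph n Q)\<^sup>*"
  unfolding index_fundamental pow_pos_iff_rtrancl[symmetric]
  using summable_pow_entry pow_entry_nonneg by (intro suminf_pos_iff) auto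

lemma index_fundamental_Suc:
  "i < n \<Longrightarrow> j < n \<Longrightarrow> fundamental $$ (i, j) = 1\<^sub>m n $$ (i, j) + (\<Sum>t. (Q ^\<^sub>m Suc t) $$ (i, j))"
  unfolding index_fundamental using suminf_split_head[OF summable_pow_entry] carrier by simp

lemma index_mult_fundamental_left:
  assumes "i < n" "j < n"
  shows "(Q * fundamental) $$ (i, j) = (\<Sum>t. (Q ^\<^sub>m Suc t) $$ (i, j))"
proof -
  have "(Q * fundamental) $$ (i, j) = (\<Sum>k<n. \<Sum>t. Q $$ (i, k) * (Q ^\<^sub>m t) $$ (k, j))"
    using assms summable_pow_entry
    by (simp add: index_mult_mat_square[OF carrier fundamental_carrier] index_fundamental suminf_mult)
  also have "\<dots> = (\<Sum>t. \<Sum>k<n. Q $$ (i, k) * (Q ^\<^sub>m t) $$ (k, j))"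
    using summable_pow_entry assms by (intro suminf_sum[symmetric] summable_mult) auto
  also have "\<dots> = (\<Sum>t. (Q * Q ^\<^sub>m t) $$ (i, j))"
    using assms by (simp add: index_mult_mat_square[OF carrier pow_carrier_mat[OF carrier]])
  finally show ?thesis unfolding pow_mat_Suc_left[OF carrier] .
qed

lemma index_mult_fundamental_right:
  assumes "i < n" "j < n"
  shows "(fundamental * Q) $$ (i, j) = (\<Sum>t. (Q ^\<^sub>m Suc t) $$ (i, j))"
proof -
  have "(fundamental * Q) $$ (i, j) = (\<Sum>k<n. \<Sum>t. (Q ^\<^sub>m t) $$ (i, k) * Q $$ (k, j))"
    using assms summable_pow_entry
    by (simp add: index_mult_mat_square[OF fundamental_carrier carrier] index_fundamental suminf_mult2)
  also have "\<dots> = (\<Sum>t. \<Sum>k<n. (Q ^\<^sub>m t) $$ (i, k) * Q $$ (k, j))"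
    using summable_pow_entry assms by (intro suminf_sum[symmetric] summable_mult2) auto
  also have "\<dots> = (\<Sum>t. (Q ^\<^sub>m Suc t) $$ (i, j))"
    using assms by (simp add: index_mult_mat_square[OF pow_carrier_mat[OF carrier] carrier])
  finally show ?thesis .
qed

lemma fundamental_inverse: "(1\<^sub>m n - Q) * fundamental = 1\<^sub>m n" "fundamental * (1\<^sub>m n - Q) = 1\<^sub>m n"
proof -
  have "(1\<^sub>m n - Q) * fundamental = fundamental - Q * fundamental"
    using minus_mult_distrib_mat[OF one_carrier_mat carrier fundamental_carrier] fundamental_carrier by simp
  also have "\<dots> = 1\<^sub>m n"
    by (rule eq_matI) (use fundamental_carrier carrier
        index_fundamental_Suc index_mult_fundamental_left in auto)
  finally show "(1\<^sub>m n - Q) * fundamental = 1\<^sub>m n" .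
  have "fundamental * (1\<^sub>m n - Q) = fundamental - fundamental * Q"
    using mult_minus_distrib_mat[OF fundamental_carrier one_carrier_mat carrier] fundamental_carrier by simp
  also have "\<dots> = 1\<^sub>m n"
    by (rule eq_matI) (use fundamental_carrier carrier
        index_fundamental_Suc index_mult_fundamental_right in auto)
  finally show "fundamental * (1\<^sub>m n - Q) = 1\<^sub>m n" .
qed

lemma mat_inverse_one_minus: "mat_inverse (1\<^sub>m n - Q) = Some fundamental"
proof -
  have c: "1\<^sub>m n - Q \<in> carrier_mat n n" using minus_carrier_mat[OF carrier] .
  have "1\<^sub>m n - Q \<in> Units (ring_mat TYPE(real) n ())"
    unfolding Units_def ring_mat_def using c fundamental_carrier fundamental_inverse by auto
  then obtain B where B: "mat_inverse (1\<^sub>m n - Q) = Some B"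
    using mat_inverse(1)[OF c, where b = "()"] by fastforce
  from mat_inverse(2)[OF c B] have Bi: "B * (1\<^sub>m n - Q) = 1\<^sub>m n" "B \<in> carrier_mat n n" by auto
  have "B = (B * (1\<^sub>m n - Q)) * fundamental"
    using assoc_mult_mat[OF Bi(2) c fundamental_carrier] fundamental_inverse Bi(2) by simp
  thus ?thesis using B Bi(1) fundamental_carrier by simp
qed

end

subsection \<open>Finite digraphs\<close>

lemma acyclic_has_sink:
  assumes "finite K" "K \<noteq> {}" "\<And>x. x \<in> K \<Longrightarrow> (x, x) \<notin> E\<^sup>+"
  shows "\<exists>x\<in>K. \<forall>y\<in>K. (x, y) \<notin> E"
proof -
  have "(x, x) \<notin> (Restr E K)\<^sup>+" for x
  proof
    assume x: "(x, x) \<in> (Restr E K)\<^sup>+"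
    have "x \<in> K" using trancl_subset_Sigma[of "Restr E K" K] x by blast
    moreover have "(x, x) \<in> E\<^sup>+" using trancl_mono[OF x] by blast
    ultimately show False using assms(3) by blast
  qed
  hence "acyclic (Restr E K)" unfolding acyclic_def by blast
  moreover have "finite (Restr E K)" using assms(1) by (intro finite_Int) simp
  ultimately have "wf ((Restr E K)\<inverse>)" by (simp add: finite_acyclic_wf acyclic_converse)
  then obtain z where "z \<in> K" "\<And>y. (y, z) \<in> (Restr E K)\<inverse> \<Longrightarrow> y \<notin> K"
    using wfE_min[of _ _ K] assms(2) by blast
  thus ?thesis by blast
qed

lemma topological_numbering:
  assumes "finite K" "\<And>x. x \<in> K \<Longrightarrow> (x, x) \<notin> E\<^sup>+"
  shows "\<exists>g. bij_betw g {..<card K} K \<and> (\<forall>i<card K. \<forall>j<card K. (g i, g j) \<in> E \<longrightarrow> i < j)"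
  using assms
proof (induction "card K" arbitrary: K)
  case 0
  thus ?case by (auto simp: bij_betw_def)
next
  case (Suc n)
  obtain x where x: "x \<in> K" "\<forall>y\<in>K. (x, y) \<notin> E"
    using acyclic_has_sink[OF Suc.prems(1) _ Suc.prems(2)] Suc.hyps(2) by fastforce
  have card: "card (K - {x}) = n" using Suc.hyps(2) x(1) Suc.prems(1) by simp
  then obtain g where g: "bij_betw g {..<n} (K - {x})" "\<forall>i<n. \<forall>j<n. (g i, g j) \<in> E \<longrightarrow> i < j"
    using Suc.hyps(1)[of "K - {x}"] Suc.prems by auto
  define g' where "g' i = (if i < n then g i else x)" for i
  have "bij_betw g' {..<n} (K - {x})" using g(1) by (subst bij_betw_cong[where g = g]) (auto simp: g'_def)
  hence "bij_betw g' ({..<n} \<union> {n}) ((K - {x}) \<union> {x})"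
    by (intro bij_betw_combine) (auto simp: g'_def)
  moreover have "{..<n} \<union> {n} = {..<Suc n}" "(K - {x}) \<union> {x} = K" using x(1) by auto
  moreover have "i < j" if "i < Suc n" "j < Suc n" "(g' i, g' j) \<in> E" for i j
  proof (cases "i < n")
    case True
    hence "g' i \<in> K" using g(1) unfolding bij_betw_def g'_def by auto
    thus ?thesis using that True g(2) x(2) by (cases "j < n") (auto simp: g'_def)
  next
    case False
    moreover have "g' j \<in> K" using that(2) g(1) x(1) unfolding bij_betw_def g'_def by auto
    ultimately show ?thesis using that x(2) by (auto simp: g'_def)
  qed
  ultimately have "bij_betw g' {..<Suc n} K \<and> (\<forall>i<Suc n. \<forall>j<Suc n. (g' i, g' j) \<in> E \<longrightarrow> i < j)"
    by simp
  thus ?case unfolding Suc.hyps(2)[symmetric] by blast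
qed

lemma trancl_into_closed_bij:
  fixes m :: nat
  assumes d: "bij_betw d {..<m} D"
    and closed: "\<And>x y. (x, y) \<in> E \<Longrightarrow> y \<in> D \<Longrightarrow> x \<in> D"
    and xy: "(x, y) \<in> E\<^sup>+" "y \<in> D"
  shows "(inv_into {..<m} d x, inv_into {..<m} d y) \<in> {(a, b). a < m \<and> b < m \<and> (d a, d b) \<in> E}\<^sup>+"
    (is "(?i x, ?i y) \<in> ?Rel\<^sup>+")
proof -
  have inv: "?i z < m" "d (?i z) = z" if "z \<in> D" for z
  proof -
    show "d (?i z) = z" using bij_betw_inv_into_right[OF d that] .
    have "?i z \<in> {..<m}" using bij_betwE[OF bij_betw_inv_into[OF d]] that by blast
    thus "?i z < m" by simp
  qed
  from xy(1) have "(?i x, ?i y) \<in> ?Rel\<^sup>+ \<and> x \<in> D"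
  proof (induction rule: converse_trancl_induct)
    case (base x)
    hence "x \<in> D" using closed xy(2) by blast
    hence "(?i x, ?i y) \<in> ?Rel" using base inv[OF \<open>x \<in> D\<close>] inv[OF xy(2)] by simp
    thus ?case using \<open>x \<in> D\<close> by blast
  next
    case (step x z)
    hence z: "z \<in> D" "(?i z, ?i y) \<in> ?Rel\<^sup>+" by blast+
    hence "x \<in> D" using closed step(1) by blast
    hence "(?i x, ?i z) \<in> ?Rel" using step(1) inv[OF \<open>x \<in> D\<close>] inv[OF z(1)] by simp
    thus ?case using trancl_into_trancl2[OF _ z(2)] \<open>x \<in> D\<close> by blast
  qed
  thus ?thesis ..
qed

lemma concat_numberings:
  fixes m n :: nat
  assumes d: "bij_betw d {..<m} D" and g: "bij_betw g {..<n - m} K"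
    and "D \<inter> K = {}" "D \<union> K = {..<n}" "m \<le> n"
  shows "\<exists>p. p permutes {..<n} \<and> (\<forall>i<m. p i = d i) \<and> (\<forall>i. m \<le> i \<and> i < n \<longrightarrow> p i = g (i - m))"
proof -
  define p where "p i = (if i < m then d i else if i < n then g (i - m) else i)" for i
  have "bij_betw p {..<m} D" using d by (subst bij_betw_cong[where g = d]) (auto simp: p_def)
  moreover have "bij_betw (\<lambda>i. i - m) {m..<n} {..<n - m}"
    by (rule bij_betw_byWitness[where f' = "\<lambda>j. j + m"]) auto
  hence "bij_betw p {m..<n} K"
    using bij_betw_trans[OF _ g] by (subst bij_betw_cong[where g = "g \<circ> (\<lambda>i. i - m)"]) (auto simp: p_def)
  ultimately have "bij_betw p ({..<m} \<union> {m..<n}) (D \<union> K)" using assms(3) by (intro bij_betw_combine)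
  moreover have "{..<m} \<union> {m..<n} = {..<n}" using assms(5) by auto
  ultimately have "p permutes {..<n}" using assms(4) by (intro bij_imp_permutes) (auto simp: p_def)
  thus ?thesis by (auto simp: p_def)
qed

lemma block_triangular_numbering:
  fixes n :: nat and E :: "(nat \<times> nat) set"
  assumes D: "D \<subseteq> {..<n}" "D \<noteq> {}"
    and closed: "\<And>x y. (x, y) \<in> E \<Longrightarrow> y \<in> D \<Longrightarrow> x \<in> D"
    and strong: "\<And>x y. x \<in> D \<Longrightarrow> y \<in> D \<Longrightarrow> (x, y) \<in> E\<^sup>+"
    and acyclic: "\<And>x. x \<in> {..<n} - D \<Longrightarrow> (x, x) \<notin> E\<^sup>+"
  shows "\<exists>p m. p permutes {..<n} \<and> 0 < m \<and> m \<le> n \<and>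
     (\<forall>i j. m \<le> i \<and> i < n \<and> j < m \<longrightarrow> (p i, p j) \<notin> E) \<and>
     (\<forall>i<m. \<forall>j<m. (i, j) \<in> {(a, b). a < m \<and> b < m \<and> (p a, p b) \<in> E}\<^sup>+) \<and>
     (\<forall>i j. m \<le> j \<and> j \<le> i \<and> i < n \<longrightarrow> (p i, p j) \<notin> E)"
proof -
  define K where "K = {..<n} - D"
  define m where "m = card D"
  have finD: "finite D" using D(1) finite_subset by blast
  obtain d where d: "bij_betw d {..<m} D"
    using ex_bij_betw_nat_finite[OF finD] unfolding m_def atLeast0LessThan by blast
  have "finite K" "\<And>x. x \<in> K \<Longrightarrow> (x, x) \<notin> E\<^sup>+" using acyclic unfolding K_def by auto
  then obtain g where g: "bij_betw g {..<card K} K" "\<forall>i<card K. \<forall>j<card K. (g i, g j) \<in> E \<longrightarrow> i < j"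
    using topological_numbering by blast
  have m: "0 < m" "m \<le> n" using D finD card_mono[OF _ D(1)] unfolding m_def by (auto simp: card_gt_0_iff)
  have card_K: "card K = n - m" unfolding K_def m_def using card_Diff_subset[OF finD D(1)] by simp
  have "D \<inter> K = {}" "D \<union> K = {..<n}" using D(1) unfolding K_def by auto
  then obtain p where p: "p permutes {..<n}" "\<And>i. i < m \<Longrightarrow> p i = d i"
      "\<And>i. m \<le> i \<Longrightarrow> i < n \<Longrightarrow> p i = g (i - m)"
    using concat_numberings[OF d g(1)[unfolded card_K]] m(2) by blast
  have pD: "bij_betw p {..<m} D" using d by (subst bij_betw_cong[where g = d]) (auto simp: p)
  have lower: "(p i, p j) \<notin> E" if "m \<le> i" "i < n" "j < m" for i j
  proof -
    have "p i \<in> K" "p j \<in> D" using that bij_betwE[OF g(1)] bij_betwE[OF pD] card_K p(3) by auto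
    thus ?thesis using closed unfolding K_def by blast
  qed
  have upper: "(p i, p j) \<notin> E" if "m \<le> j" "j \<le> i" "i < n" for i j
  proof -
    have "i - m < card K" "j - m < card K" "\<not> i - m < j - m" using that card_K by auto
    hence "(g (i - m), g (j - m)) \<notin> E" using g(2) by blast
    thus ?thesis using that by (simp add: p(3))
  qed
  have block: "(i, j) \<in> {(a, b). a < m \<and> b < m \<and> (p a, p b) \<in> E}\<^sup>+" if "i < m" "j < m" for i j
  proof -
    have "p i \<in> D" "p j \<in> D" using that bij_betwE[OF pD] by auto
    hence "(inv_into {..<m} p (p i), inv_into {..<m} p (p j)) \<in> {(a, b). a < m \<and> b < m \<and> (p a, p b) \<in> E}\<^sup>+"
      using trancl_into_closed_bij[OF pD closed strong] by simp
    moreover have "inv_into {..<m} p (p k) = k" if "k < m" for k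
      using that bij_betw_inv_into_left[OF pD] by simp
    ultimately show ?thesis using that by simp
  qed
  show ?thesis using p(1) m lower upper block by (intro exI[of _ p] exI[of _ m]) blast
qed

subsection \<open>Spectral facts\<close>

lemma cnj_mem_spectrum_of_real:
  fixes X :: "real mat"
  assumes X: "X \<in> carrier_mat n n" and e: "e \<in> spectrum (map_mat complex_of_real X)"
  shows "cnj e \<in> spectrum (map_mat complex_of_real X)"
proof -
  define Y where "Y = map_mat complex_of_real X"
  have Y: "Y \<in> carrier_mat n n" unfolding Y_def using X by simp
  from e obtain v where v: "v \<in> carrier_vec n" "v \<noteq> 0\<^sub>v n" "Y *\<^sub>v v = e \<cdot>\<^sub>v v"
    unfolding spectrum_def eigenvalue_def eigenvector_def Y_def[symmetric] using Y by auto
  define w where "w = map_vec cnj v"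
  have w: "w \<in> carrier_vec n" unfolding w_def using v by simp
  have "w \<noteq> 0\<^sub>v n"
  proof
    assume "w = 0\<^sub>v n"
    hence "cnj (v $ j) = 0" if "j < n" for j using that v(1) unfolding w_def by (metis index_map_vec(1) index_zero_vec(1) carrier_vecD)
    hence "v = 0\<^sub>v n" using v(1) by (intro eq_vecI) auto
    thus False using v(2) by simp
  qed
  moreover have "Y *\<^sub>v w = cnj e \<cdot>\<^sub>v w"
  proof (rule eq_vecI)
    fix i assume "i < dim_vec (cnj e \<cdot>\<^sub>v w)"
    hence i: "i < n" using w by simp
    have "(Y *\<^sub>v w) $ i = cnj (\<Sum>j<n. Y $$ (i, j) * v $ j)"
      using Y X i w v(1) unfolding w_def Y_def by (simp add: scalar_prod_def atLeast0LessThan)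
    also have "(\<Sum>j<n. Y $$ (i, j) * v $ j) = e * v $ i"
      using v(3)[THEN arg_cong[of _ _ "\<lambda>x. x $ i"]] Y i v(1) by (simp add: scalar_prod_def atLeast0LessThan)
    finally show "(Y *\<^sub>v w) $ i = (cnj e \<cdot>\<^sub>v w) $ i" using w i v(1) unfolding w_def by simp
  qed (use Y w in simp)
  ultimately show ?thesis unfolding spectrum_def eigenvalue_def eigenvector_def Y_def[symmetric] using Y w by auto
qed

lemma delta_mem_spectrum:
  fixes Y :: "complex mat"
  assumes Y: "Y \<in> carrier_mat n n" and n: "0 < n" and cnj: "\<And>e. e \<in> spectrum Y \<Longrightarrow> cnj e \<in> spectrum Y"
  shows "delta Y \<in> spectrum Y"
proof -
  define S where "S = {e \<in> spectrum Y. cmod e = spectral_radius Y \<and> Arg e \<ge> 0}"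
  obtain e0 where e0: "e0 \<in> spectrum Y" "cmod e0 = spectral_radius Y"
    using spectral_radius_mem_max(1)[OF Y n] by auto
  have "e0 \<in> S \<or> cnj e0 \<in> S" unfolding S_def using e0 cnj[OF e0(1)] by (auto simp: Arg_less_0)
  hence ne: "S \<noteq> {}" by blast
  have fin: "finite S" unfolding S_def using card_finite_spectrum(1)[OF Y] by simp
  have "Max (Re ` S) \<in> Re ` S" using fin ne by (intro Max_in) auto
  then obtain e where e: "e \<in> S" "Re e = Max (Re ` S)" by auto
  have e_max: "Re u \<le> Re e" if "u \<in> S" for u using that fin e(2) by simp
  have "e' = e" if e': "e' \<in> S" "\<forall>u\<in>S. Re u \<le> Re e'" for e'
  proof -
    have re: "Re e' = Re e" using e(1) e' e_max by (simp add: order_antisym)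
    have nrm: "cmod e' = cmod e" "0 \<le> Im e'" "0 \<le> Im e" using e' e(1) unfolding S_def by (auto simp: Arg_less_0)
    have "(Re e')\<^sup>2 + (Im e')\<^sup>2 = (Re e)\<^sup>2 + (Im e)\<^sup>2" using nrm(1) unfolding cmod_def by simp
    hence "(Im e')\<^sup>2 = (Im e)\<^sup>2" using re by simp
    hence "Im e' = Im e" using nrm(2,3) by (simp add: power2_eq_iff_nonneg)
    thus ?thesis using re by (simp add: complex_eqI)
  qed
  hence "delta Y = e" unfolding delta_def Let_def S_def[symmetric]
    using e(1) e_max by (intro the_equality) blast+
  thus ?thesis using e(1) unfolding S_def by simp
qed

lemma delta_eigenvector_of_real:
  fixes X :: "real mat"
  assumes X: "X \<in> carrier_mat n n" and n: "0 < n"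
    and t: "complex_of_real t = delta (map_mat complex_of_real X)"
  shows "\<exists>v. v \<in> carrier_vec n \<and> v \<noteq> 0\<^sub>v n \<and> map_mat complex_of_real X *\<^sub>v v = complex_of_real t \<cdot>\<^sub>v v"
proof -
  have "complex_of_real t \<in> spectrum (map_mat complex_of_real X)"
    unfolding t using X n cnj_mem_spectrum_of_real[OF X] by (intro delta_mem_spectrum) auto
  thus ?thesis using X unfolding spectrum_def eigenvalue_def eigenvector_def by auto
qed

lemma subinvariant_const_of_irred:
  fixes P :: "nat \<Rightarrow> nat \<Rightarrow> real" and u :: "nat \<Rightarrow> real"
  assumes irred: "irred n P"
    and nonneg: "\<And>i j. i < n \<Longrightarrow> j < n \<Longrightarrow> 0 \<le> P i j"
    and stochastic: "\<And>i. i < n \<Longrightarrow> (\<Sum>j<n. P i j) = 1"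
    and sub: "\<And>i. i < n \<Longrightarrow> u i \<le> (\<Sum>j<n. P i j * u j)"
    and j: "j < n"
  shows "u j = Max (u ` {..<n})"
proof -
  define c where "c = Max (u ` {..<n})"
  have le_c: "u k \<le> c" if "k < n" for k unfolding c_def using that by (intro Max_ge) auto
  have step: "u k = c" if "(i, k) \<in> {(a, b). a < n \<and> b < n \<and> P a b > 0}" "u i = c" for i k
  proof -
    have ik: "i < n" "k < n" "0 < P i k" using that(1) by auto
    have "(\<Sum>l<n. P i l * (c - u l)) = c - (\<Sum>l<n. P i l * u l)"
      using stochastic[OF ik(1)] by (simp add: algebra_simps sum_subtractf sum_distrib_left[symmetric])
    also have "\<dots> \<le> 0" using sub[OF ik(1)] that(2) by simp
    finally have "(\<Sum>l<n. P i l * (c - u l)) = 0"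
      using nonneg ik(1) le_c by (intro antisym sum_nonneg) auto
    hence "\<forall>l\<in>{..<n}. P i l * (c - u l) = 0"
      using nonneg ik(1) le_c by (subst (asm) sum_nonneg_eq_0_iff) auto
    hence "P i k * (c - u k) = 0" using ik(2) by blast
    thus ?thesis using ik(3) by simp
  qed
  obtain i0 where i0: "i0 < n" "u i0 = c" using Max_in[of "u ` {..<n}"] j unfolding c_def by fastforce
  have "(i0, j) \<in> {(a, b). a < n \<and> b < n \<and> P a b > 0}\<^sup>+" using irred i0(1) j unfolding irred_def by blast
  hence "u j = c" by (induction rule: trancl_induct) (use step i0(2) in blast)+
  thus ?thesis unfolding c_def .
qed

subsection \<open>First passages of the level process\<close>

locale mg1 =
  fixes M :: nat and A :: "nat \<Rightarrow> real mat"
  assumes dim_A: "\<And>k. A k \<in> carrier_mat M M"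
    and A_nonneg: "\<And>k i j. i < M \<Longrightarrow> j < M \<Longrightarrow> 0 \<le> A k $$ (i, j)"
    and A_summable: "\<And>i j. i < M \<Longrightarrow> j < M \<Longrightarrow> summable (\<lambda>k. A k $$ (i, j))"
    and A_stochastic: "\<And>i. i < M \<Longrightarrow> (\<Sum>j<M. \<Sum>k. A k $$ (i, j)) = 1"
begin

text \<open>From phase \<open>i\<close>, the level changes by \<open>m - 1\<close> with probability \<open>jump_prob i m\<close>.\<close>

definition jump_prob :: "nat \<Rightarrow> nat \<Rightarrow> real" where
  "jump_prob i m = (\<Sum>j<M. A m $$ (i, j))"

lemma jump_prob_sums: "i < M \<Longrightarrow> jump_prob i sums 1"
proof -
  assume i: "i < M"
  have "(\<lambda>m. \<Sum>j<M. A m $$ (i, j)) sums (\<Sum>j<M. \<Sum>k. A k $$ (i, j))"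
    using A_summable i by (intro sums_sum summable_sums) auto
  thus ?thesis unfolding jump_prob_def A_stochastic[OF i] .
qed

lemma jump_prob_nonneg: "i < M \<Longrightarrow> 0 \<le> jump_prob i m"
  unfolding jump_prob_def using A_nonneg by (auto intro: sum_nonneg)

lemma A_le_jump_prob: "i < M \<Longrightarrow> j < M \<Longrightarrow> A m $$ (i, j) \<le> jump_prob i m"
  unfolding jump_prob_def using A_nonneg by (intro member_le_sum) auto

definition hit_term :: "nat \<Rightarrow> nat \<Rightarrow> nat \<Rightarrow> nat \<Rightarrow> nat \<Rightarrow> real" where
  "hit_term n l i j m = (if m = 0 \<and> l = 1 \<and> n = 0 then A 0 $$ (i, j) else 0)
     + (\<Sum>i'<M. if 2 \<le> l + m then A m $$ (i, i') * hit M A n (l + m - 1) i' j else 0)"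

lemma hit_term_bounds:
  assumes i: "i < M" and j: "j < M"
    and bound: "\<And>l i'. i' < M \<Longrightarrow> 0 \<le> hit M A n l i' j \<and> hit M A n l i' j \<le> 1"
  shows "0 \<le> hit_term n l i j m" "hit_term n l i j m \<le> jump_prob i m"
proof -
  define f where "f = (\<Sum>i'<M. if 2 \<le> l + m then A m $$ (i, i') * hit M A n (l + m - 1) i' j else 0)"
  have f: "0 \<le> f" "f \<le> (if 2 \<le> l + m then jump_prob i m else 0)"
    unfolding f_def jump_prob_def using A_nonneg[OF i] bound
    by (auto intro!: sum_nonneg sum_mono simp: mult_left_le)
  show "0 \<le> hit_term n l i j m" using f A_nonneg[OF i j] unfolding hit_term_def f_def[symmetric] by simp
  show "hit_term n l i j m \<le> jump_prob i m"
    using f A_le_jump_prob[OF i j] jump_prob_nonneg[OF i] unfolding hit_term_def f_def[symmetric]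
    by (auto split: if_splits)
qed

lemma hit_term_sums:
  assumes i: "i < M" and j: "j < M"
    and bound: "\<And>l i'. i' < M \<Longrightarrow> 0 \<le> hit M A n l i' j \<and> hit M A n l i' j \<le> 1"
  shows "hit_term n l i j sums hit M A (Suc n) l i j"
proof -
  define c where "c = (if l = 1 \<and> n = 0 then A 0 $$ (i, j) else 0)"
  define f where "f m = (\<Sum>i'<M. if 2 \<le> l + m then A m $$ (i, i') * hit M A n (l + m - 1) i' j else 0)" for m
  have split: "hit_term n l i j = (\<lambda>m. (if m = 0 then c else 0) + f m)"
    unfolding hit_term_def c_def f_def by auto
  have "summable (hit_term n l i j)"
  proof (rule summable_comparison_test'[where g = "jump_prob i" and N = 0])
    show "summable (jump_prob i)" using jump_prob_sums[OF i] by (rule sums_summable)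
    show "norm (hit_term n l i j m) \<le> jump_prob i m" for m using hit_term_bounds[OF assms, of l m] by simp
  qed
  hence "summable (\<lambda>m. hit_term n l i j m - (if m = 0 then c else 0))"
    using summable_single[of 0 "\<lambda>_. c"] by (intro summable_diff)
  hence "summable f" unfolding split by simp
  hence "hit_term n l i j sums (c + suminf f)"
    unfolding split using sums_single[of 0 "\<lambda>_. c"] by (intro sums_add) (auto simp: summable_sums)
  moreover have "hit M A (Suc n) l i j = c + suminf f" unfolding c_def f_def by simp
  ultimately show ?thesis by simp
qed

lemma hit_bounds: "i < M \<Longrightarrow> j < M \<Longrightarrow> 0 \<le> hit M A n l i j \<and> hit M A n l i j \<le> 1"
proof (induction n arbitrary: l i)
  case (Suc n)
  have bound: "\<And>l i'. i' < M \<Longrightarrow> 0 \<le> hit M A n l i' j \<and> hit M A n l i' j \<le> 1" using Suc by blast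
  note sums = hit_term_sums[OF Suc.prems bound, of l]
  have "0 \<le> hit M A (Suc n) l i j"
    using sums_le[OF _ sums_zero sums] hit_term_bounds[OF Suc.prems bound] by blast
  moreover have "hit M A (Suc n) l i j \<le> 1"
    using sums_le[OF _ sums jump_prob_sums[OF Suc.prems(1)]] hit_term_bounds[OF Suc.prems bound] by blast
  ultimately show ?case by blast
qed simp

lemma hit_term_row_sum_le:
  assumes i: "i < M"
    and IH: "\<And>l' i'. i' < M \<Longrightarrow> (\<Sum>j<M. \<Sum>n<N. hit M A n l' i' j) \<le> 1"
  shows "(\<Sum>j<M. \<Sum>n<N. hit_term n l i j m) \<le> jump_prob i m"
proof (cases "m = 0 \<and> l = 1")
  case True
  have "(\<Sum>j<M. \<Sum>n<N. hit_term n l i j m) = (\<Sum>j<M. \<Sum>n<N. if n = 0 then A 0 $$ (i, j) else 0)"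
    unfolding hit_term_def using True by simp
  also have "\<dots> \<le> (\<Sum>j<M. A 0 $$ (i, j))"
    using A_nonneg[OF i] by (intro sum_mono) simp
  finally show ?thesis unfolding jump_prob_def using True by simp
next
  case False
  define l' where "l' = l + m - 1"
  have "(\<Sum>j<M. \<Sum>n<N. hit_term n l i j m)
      = (\<Sum>j<M. \<Sum>n<N. \<Sum>i'<M. if 2 \<le> l + m then A m $$ (i, i') * hit M A n l' i' j else 0)"
    unfolding hit_term_def l'_def using False by (intro sum.cong refl) auto
  also have "\<dots> = (\<Sum>i'<M. \<Sum>j<M. \<Sum>n<N. if 2 \<le> l + m then A m $$ (i, i') * hit M A n l' i' j else 0)"
    by (subst sum.swap) (simp add: sum.swap[of _ "{..<N}"])
  also have "\<dots> \<le> (\<Sum>i'<M. A m $$ (i, i'))"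
  proof (rule sum_mono)
    fix i' assume "i' \<in> {..<M}"
    hence "A m $$ (i, i') * (\<Sum>j<M. \<Sum>n<N. hit M A n l' i' j) \<le> A m $$ (i, i')"
      using IH A_nonneg[OF i] by (simp add: mult_left_le)
    thus "(\<Sum>j<M. \<Sum>n<N. if 2 \<le> l + m then A m $$ (i, i') * hit M A n l' i' j else 0) \<le> A m $$ (i, i')"
      using A_nonneg[OF i] \<open>i' \<in> {..<M}\<close> by (cases "2 \<le> l + m") (auto simp: sum_distrib_left)
  qed
  finally show ?thesis unfolding jump_prob_def .
qed

lemma hit_partial_row_sum: "i < M \<Longrightarrow> (\<Sum>j<M. \<Sum>n<N. hit M A n l i j) \<le> 1"
proof (induction N arbitrary: l i)
  case (Suc N)
  have IH: "\<And>l' i'. i' < M \<Longrightarrow> (\<Sum>j<M. \<Sum>n<N. hit M A n l' i' j) \<le> 1" using Suc.IH by blast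
  have bound: "\<And>l i' j. i' < M \<Longrightarrow> j < M \<Longrightarrow> 0 \<le> hit M A n l i' j \<and> hit M A n l i' j \<le> 1" for n
    using hit_bounds by blast
  have "(\<lambda>m. \<Sum>j<M. \<Sum>n<N. hit_term n l i j m) sums (\<Sum>j<M. \<Sum>n<N. hit M A (Suc n) l i j)"
    using hit_term_sums[OF Suc.prems _ bound] by (intro sums_sum) auto
  from sums_le[OF _ this jump_prob_sums[OF Suc.prems]]
  have "(\<Sum>j<M. \<Sum>n<N. hit M A (Suc n) l i j) \<le> 1" using hit_term_row_sum_le[OF Suc.prems IH] by blast
  thus ?case by (simp only: sum.lessThan_Suc_shift hit.simps(1) add_0_left)
qed simp

lemma hit_summable: "i < M \<Longrightarrow> j < M \<Longrightarrow> summable (\<lambda>n. hit M A n l i j)"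
proof (rule summableI_nonneg_bounded[where x = 1])
  fix N assume ij: "i < M" "j < M"
  have "(\<Sum>n<N. hit M A n l i j) \<le> (\<Sum>j'<M. \<Sum>n<N. hit M A n l i j')"
    using ij hit_bounds by (intro member_le_sum[of j "{..<M}" "\<lambda>j'. \<Sum>n<N. hit M A n l i j'"] sum_nonneg) auto
  thus "(\<Sum>n<N. hit M A n l i j) \<le> 1" using hit_partial_row_sum[OF ij(1), where N = N and l = l] by linarith
qed (use hit_bounds in blast)

lemma Gmat_carrier: "Gmat M A \<in> carrier_mat M M"
  unfolding Gmat_def by simp

lemma index_Gmat: "i < M \<Longrightarrow> j < M \<Longrightarrow> Gmat M A $$ (i, j) = (\<Sum>n. hit M A n 1 i j)"
  unfolding Gmat_def by simp

lemma Gmat_substochastic: "substochastic M (Gmat M A)"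
proof -
  have "0 \<le> Gmat M A $$ (i, j)" if "i < M" "j < M" for i j
    unfolding index_Gmat[OF that] using hit_summable[OF that] hit_bounds[OF that] by (intro suminf_nonneg) auto
  moreover have "row_sum M (Gmat M A) i \<le> 1" if i: "i < M" for i
  proof -
    have "row_sum M (Gmat M A) i = (\<Sum>j<M. \<Sum>n. hit M A n 1 i j)"
      unfolding row_sum_def using i by (simp add: index_Gmat)
    also have "\<dots> = (\<Sum>n. \<Sum>j<M. hit M A n 1 i j)"
      using hit_summable i by (intro suminf_sum[symmetric]) auto
    also have "\<dots> \<le> 1"
      using hit_summable i hit_partial_row_sum[OF i, where l = 1]
      by (intro suminf_le_const summable_sum) (auto simp: sum.swap[of _ "{..<M}"])
    finally show ?thesis .
  qed
  ultimately show ?thesis unfolding substochastic_def using Gmat_carrier by auto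
qed

text \<open>\<open>first_passage n l i j\<close>: starting \<open>l\<close> levels above some level \<open>k \<ge> 1\<close> in phase \<open>i\<close>, the chain can
  enter level \<open>k\<close> for the first time at step \<open>n\<close>, in phase \<open>j\<close>; this is the support of \<open>hit\<close>.\<close>

inductive first_passage :: "nat \<Rightarrow> nat \<Rightarrow> nat \<Rightarrow> nat \<Rightarrow> bool" where
  down: "i < M \<Longrightarrow> j < M \<Longrightarrow> 0 < A 0 $$ (i, j) \<Longrightarrow> first_passage (Suc 0) 1 i j"
| jump: "i < M \<Longrightarrow> x < M \<Longrightarrow> 0 < A m $$ (i, x) \<Longrightarrow> 2 \<le> l + m \<Longrightarrow>
    first_passage n (l + m - 1) x j \<Longrightarrow> first_passage (Suc n) l i j"

lemma first_passage_bounded: "first_passage n l i j \<Longrightarrow> i < M \<and> j < M"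
  by (induction rule: first_passage.induct) auto

lemma hit_term_pos_iff:
  assumes i: "i < M" and j: "j < M"
    and bound: "\<And>l i'. i' < M \<Longrightarrow> 0 \<le> hit M A n l i' j \<and> hit M A n l i' j \<le> 1"
  shows "0 < hit_term n l i j m \<longleftrightarrow> (m = 0 \<and> l = 1 \<and> n = 0 \<and> 0 < A 0 $$ (i, j)) \<or>
           (\<exists>x<M. 2 \<le> l + m \<and> 0 < A m $$ (i, x) \<and> 0 < hit M A n (l + m - 1) x j)"
proof -
  define f where "f = (\<Sum>x<M. if 2 \<le> l + m then A m $$ (i, x) * hit M A n (l + m - 1) x j else 0)"
  have "0 < f \<longleftrightarrow> (\<exists>x\<in>{..<M}. 0 < (if 2 \<le> l + m then A m $$ (i, x) * hit M A n (l + m - 1) x j else 0))"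
    unfolding f_def using A_nonneg[OF i] bound by (intro sum_pos_iff_ex_pos) auto
  also have "\<dots> \<longleftrightarrow> (\<exists>x<M. 2 \<le> l + m \<and> 0 < A m $$ (i, x) \<and> 0 < hit M A n (l + m - 1) x j)"
    using A_nonneg[OF i] bound by (auto simp: mult_nonneg_pos_iff)
  finally have "0 < f \<longleftrightarrow> \<dots>" .
  moreover have "0 \<le> f" unfolding f_def using A_nonneg[OF i] bound by (intro sum_nonneg) auto
  moreover have "f = 0" if "l + m < 2" unfolding f_def using that by simp
  ultimately show ?thesis unfolding hit_term_def f_def[symmetric] using A_nonneg[OF i j] by auto
qed

lemma hit_pos_iff: "i < M \<Longrightarrow> j < M \<Longrightarrow> 0 < hit M A n l i j \<longleftrightarrow> first_passage n l i j"
proof (induction n arbitrary: l i)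
  case 0
  then show ?case by (auto elim: first_passage.cases)
next
  case (Suc n)
  have bound: "\<And>l i'. i' < M \<Longrightarrow> 0 \<le> hit M A n l i' j \<and> hit M A n l i' j \<le> 1"
    using hit_bounds Suc.prems by blast
  note sums = hit_term_sums[OF Suc.prems bound, of l]
  have "0 < hit M A (Suc n) l i j \<longleftrightarrow> (\<exists>m. 0 < hit_term n l i j m)"
    using suminf_pos_iff[OF sums_summable[OF sums] hit_term_bounds(1)[OF Suc.prems bound]] sums
    by (simp add: sums_iff)
  also have "\<dots> \<longleftrightarrow> (l = 1 \<and> n = 0 \<and> 0 < A 0 $$ (i, j)) \<or>
      (\<exists>m x. x < M \<and> 2 \<le> l + m \<and> 0 < A m $$ (i, x) \<and> first_passage n (l + m - 1) x j)"
  proof -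
    have "0 < hit_term n l i j m \<longleftrightarrow> (m = 0 \<and> l = 1 \<and> n = 0 \<and> 0 < A 0 $$ (i, j)) \<or>
        (\<exists>x. x < M \<and> 2 \<le> l + m \<and> 0 < A m $$ (i, x) \<and> first_passage n (l + m - 1) x j)" for m
      using hit_term_pos_iff[OF Suc.prems bound, of l m] Suc.prems(2) by (simp add: Suc.IH cong: conj_cong)
    thus ?thesis by blast
  qed
  also have "\<dots> \<longleftrightarrow> first_passage (Suc n) l i j"
  proof
    assume "(l = 1 \<and> n = 0 \<and> 0 < A 0 $$ (i, j)) \<or>
      (\<exists>m x. x < M \<and> 2 \<le> l + m \<and> 0 < A m $$ (i, x) \<and> first_passage n (l + m - 1) x j)"
    thus "first_passage (Suc n) l i j"
      using first_passage.down[OF Suc.prems] first_passage.jump[OF Suc.prems(1)] by blast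
  next
    assume "first_passage (Suc n) l i j"
    thus "(l = 1 \<and> n = 0 \<and> 0 < A 0 $$ (i, j)) \<or>
      (\<exists>m x. x < M \<and> 2 \<le> l + m \<and> 0 < A m $$ (i, x) \<and> first_passage n (l + m - 1) x j)"
      by (cases rule: first_passage.cases) auto
  qed
  finally show ?case .
qed

definition descends :: "nat \<Rightarrow> nat \<Rightarrow> nat \<Rightarrow> bool" where
  "descends l i j \<longleftrightarrow> (if l = 0 then i = j else \<exists>n. first_passage n l i j)"

lemma Gmat_pos_iff: "i < M \<Longrightarrow> j < M \<Longrightarrow> 0 < Gmat M A $$ (i, j) \<longleftrightarrow> descends 1 i j"
  unfolding index_Gmat descends_def using hit_summable hit_bounds hit_pos_iff
  by (subst suminf_pos_iff) auto

lemma first_passage_descends_trans: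
  "first_passage n a x y \<Longrightarrow> descends b y z \<Longrightarrow> 1 \<le> b \<Longrightarrow> descends (a + b) x z"
proof (induction arbitrary: z rule: first_passage.induct)
  case (down i j)
  then obtain n' where "first_passage n' b j z" unfolding descends_def by auto
  hence "first_passage (Suc n') (1 + b) i z" using first_passage.jump[of i j 0 "1 + b" n' z] down by simp
  thus ?case unfolding descends_def by auto
next
  case (jump i x m l n j)
  then obtain n' where "first_passage n' (l + m - 1 + b) x z" unfolding descends_def by auto
  moreover have "l + b + m - 1 = l + m - 1 + b" using jump by simp
  ultimately have "first_passage (Suc n') (l + b) i z" using first_passage.jump[of i x m "l + b" n' z] jump by simp
  thus ?case using jump.prems(2) unfolding descends_def by auto
qed

lemma descends_trans:
  assumes "descends a x y" "descends b y z"
  shows "descends (a + b) x z"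
proof (cases "a = 0 \<or> b = 0")
  case True
  thus ?thesis using assms unfolding descends_def by (auto split: if_splits)
next
  case False
  then obtain n where "first_passage n a x y" using assms(1) unfolding descends_def by auto
  thus ?thesis using first_passage_descends_trans assms(2) False by simp
qed

lemma first_passage_split:
  "first_passage n l x z \<Longrightarrow> l = a + b \<Longrightarrow> 1 \<le> a \<Longrightarrow> 1 \<le> b \<Longrightarrow> \<exists>y<M. descends a x y \<and> descends b y z"
proof (induction arbitrary: a rule: first_passage.induct)
  case (jump i x m l n j)
  show ?case
  proof (cases "2 \<le> a + m")
    case True
    have "l + m - 1 = (a + m - 1) + b" "1 \<le> a + m - 1" using jump.prems True by auto
    then obtain y where y: "y < M" "descends (a + m - 1) x y" "descends b y j"
      using jump.IH jump.prems(3) by blast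
    then obtain n' where "first_passage n' (a + m - 1) x y" using True unfolding descends_def by (auto split: if_splits)
    hence "first_passage (Suc n') a i y" using first_passage.jump[of i x m a n' y] jump True by simp
    hence "descends a i y" using jump.prems(2) unfolding descends_def by auto
    thus ?thesis using y by blast
  next
    case False
    hence "a = 1" "m = 0" using jump by auto
    hence "first_passage (Suc 0) 1 i x" "first_passage n b x j" using first_passage.down[of i x] jump by auto
    thus ?thesis using jump \<open>a = 1\<close> unfolding descends_def by auto
  qed
qed simp

lemma Gmat_pow_pos_iff: "i < M \<Longrightarrow> j < M \<Longrightarrow> 0 < (Gmat M A ^\<^sub>m m) $$ (i, j) \<longleftrightarrow> descends m i j"
proof (induction m arbitrary: j)
  case 0
  then show ?case unfolding descends_def using Gmat_carrier by auto
next
  case (Suc m)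
  have "0 < (Gmat M A ^\<^sub>m Suc m) $$ (i, j) \<longleftrightarrow> (\<exists>y<M. descends m i y \<and> descends 1 y j)"
    using mult_mat_pos_iff[OF pow_carrier_mat[OF Gmat_carrier] Gmat_carrier Suc.prems]
      substochastic_entry[OF substochastic_pow[OF Gmat_substochastic]]
      substochastic_entry[OF Gmat_substochastic] Suc.IH Gmat_pos_iff Suc.prems by auto
  also have "\<dots> \<longleftrightarrow> descends (Suc m) i j"
  proof
    assume "descends (Suc m) i j"
    thus "\<exists>y<M. descends m i y \<and> descends 1 y j"
    proof (cases "m = 0")
      case False
      then obtain n where "first_passage n (m + 1) i j" using \<open>descends (Suc m) i j\<close> unfolding descends_def by auto
      thus ?thesis using first_passage_split[of n "m + 1" i j m 1] False by auto
    qed (use Suc.prems in \<open>auto simp: descends_def\<close>)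
  qed (use descends_trans in fastforce)
  finally show ?case .
qed

lemma descends_down: "i < M \<Longrightarrow> j < M \<Longrightarrow> 0 < A 0 $$ (i, j) \<Longrightarrow> descends 1 i j"
  unfolding descends_def using first_passage.down by auto

lemma descends_jump:
  assumes "i < M" "x < M" "0 < A m $$ (i, x)" "1 \<le> l" "2 \<le> l + m" "descends (l + m - 1) x y"
  shows "descends l i y"
proof -
  obtain n where "first_passage n (l + m - 1) x y" using assms(5,6) unfolding descends_def by (auto split: if_splits)
  hence "first_passage (Suc n) l i y" using first_passage.jump assms(1-3,5) by blast
  thus ?thesis using assms(4) unfolding descends_def by auto
qed

subsection \<open>The matrices \<open>U(k)\<close>\<close>

definition jump_tail :: "nat \<Rightarrow> nat \<Rightarrow> real" where
  "jump_tail i k = (\<Sum>m. jump_prob i (m + k))"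

lemma jump_tail_summable: "i < M \<Longrightarrow> summable (\<lambda>m. jump_prob i (m + k))"
  by (rule summable_ignore_initial_segment[OF sums_summable[OF jump_prob_sums]])

lemma Umat_carrier: "Umat M A k \<in> carrier_mat M M"
  unfolding Umat_def msuminf_def by simp

lemma index_Umat:
  "a < M \<Longrightarrow> c < M \<Longrightarrow> Umat M A k $$ (a, c) = (\<Sum>m. (A (m + k + 1) * Gmat M A ^\<^sub>m m) $$ (a, c))"
  unfolding Umat_def msuminf_def by simp

lemma A_Gmat_pow_bounds:
  assumes "a < M" "c < M"
  shows "0 \<le> (A n * Gmat M A ^\<^sub>m m) $$ (a, c)" "row_sum M (A n * Gmat M A ^\<^sub>m m) a \<le> jump_prob a n"
proof -
  have G: "substochastic M (Gmat M A ^\<^sub>m m)" by (rule substochastic_pow[OF Gmat_substochastic])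
  show "0 \<le> (A n * Gmat M A ^\<^sub>m m) $$ (a, c)"
    unfolding index_mult_mat_square[OF dim_A pow_carrier_mat[OF Gmat_carrier] assms]
    using A_nonneg[OF assms(1)] substochastic_entry[OF G] assms(2) by (intro sum_nonneg mult_nonneg_nonneg) auto
  have "row_sum M (A n * Gmat M A ^\<^sub>m m) a \<le> row_sum M (A n) a * 1"
    using A_nonneg[OF assms(1)] G unfolding substochastic_def
    by (intro row_sum_mult_le[OF dim_A pow_carrier_mat[OF Gmat_carrier] assms(1)]) auto
  thus "row_sum M (A n * Gmat M A ^\<^sub>m m) a \<le> jump_prob a n" unfolding jump_prob_def row_sum_def by simp
qed

lemma A_Gmat_pow_le_jump_prob:
  assumes "a < M" "c < M"
  shows "(A n * Gmat M A ^\<^sub>m m) $$ (a, c) \<le> jump_prob a n"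
proof -
  have "(A n * Gmat M A ^\<^sub>m m) $$ (a, c) \<le> row_sum M (A n * Gmat M A ^\<^sub>m m) a"
    unfolding row_sum_def using A_Gmat_pow_bounds(1)[OF assms(1)] assms by (intro member_le_sum) auto
  thus ?thesis using A_Gmat_pow_bounds(2)[OF assms, of n m] by linarith
qed

lemma Umat_summable:
  assumes "a < M" "c < M"
  shows "summable (\<lambda>m. (A (m + k + 1) * Gmat M A ^\<^sub>m m) $$ (a, c))"
proof (rule summable_comparison_test'[OF jump_tail_summable[OF assms(1), of "k + 1"], where N = 0])
  show "norm ((A (m + k + 1) * Gmat M A ^\<^sub>m m) $$ (a, c)) \<le> jump_prob a (m + (k + 1))" for m
    using A_Gmat_pow_bounds(1)[OF assms] A_Gmat_pow_le_jump_prob[OF assms] by (simp add: add.assoc)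
qed

lemma Umat_nonneg: "a < M \<Longrightarrow> c < M \<Longrightarrow> 0 \<le> Umat M A k $$ (a, c)"
  unfolding index_Umat using Umat_summable A_Gmat_pow_bounds(1) by (intro suminf_nonneg) auto

lemma Umat_pos_iff:
  assumes "a < M" "c < M"
  shows "0 < Umat M A k $$ (a, c) \<longleftrightarrow> (\<exists>m x. x < M \<and> 0 < A (m + k + 1) $$ (a, x) \<and> descends m x c)"
proof -
  have "0 < Umat M A k $$ (a, c) \<longleftrightarrow> (\<exists>m. 0 < (A (m + k + 1) * Gmat M A ^\<^sub>m m) $$ (a, c))"
    unfolding index_Umat[OF assms] using Umat_summable[OF assms] A_Gmat_pow_bounds(1)[OF assms]
    by (intro suminf_pos_iff) auto
  also have "\<dots> \<longleftrightarrow> (\<exists>m x. x < M \<and> 0 < A (m + k + 1) $$ (a, x) \<and> descends m x c)"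
  proof -
    have "0 < (A n * Gmat M A ^\<^sub>m m) $$ (a, c) \<longleftrightarrow> (\<exists>x<M. 0 < A n $$ (a, x) \<and> descends m x c)" for n m
      using mult_mat_pos_iff[OF dim_A pow_carrier_mat[OF Gmat_carrier] assms] A_nonneg
        substochastic_entry[OF substochastic_pow[OF Gmat_substochastic]] Gmat_pow_pos_iff[OF _ assms(2)]
      by (simp cong: conj_cong)
    thus ?thesis by blast
  qed
  finally show ?thesis .
qed

lemma Umat_le_jump_tail:
  assumes "a < M" "c < M"
  shows "Umat M A k $$ (a, c) \<le> jump_tail a (k + 1)"
  unfolding index_Umat[OF assms] jump_tail_def
proof (rule suminf_le[OF _ Umat_summable[OF assms] jump_tail_summable[OF assms(1)]])
  show "(A (m + k + 1) * Gmat M A ^\<^sub>m m) $$ (a, c) \<le> jump_prob a (m + (k + 1))" for m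
    using A_Gmat_pow_le_jump_prob[OF assms] by (simp add: add.assoc)
qed

lemma row_sum_Umat0_le: "a < M \<Longrightarrow> row_sum M (Umat M A 0) a \<le> 1 - jump_prob a 0"
proof -
  assume a: "a < M"
  have "row_sum M (Umat M A 0) a = (\<Sum>j<M. \<Sum>m. (A (m + 0 + 1) * Gmat M A ^\<^sub>m m) $$ (a, j))"
    unfolding row_sum_def using a by (intro sum.cong refl index_Umat) auto
  also have "\<dots> = (\<Sum>m. row_sum M (A (m + 0 + 1) * Gmat M A ^\<^sub>m m) a)"
    unfolding row_sum_def using a Umat_summable[of a _ 0] by (intro suminf_sum[symmetric]) auto
  also have "\<dots> \<le> (\<Sum>m. jump_prob a (m + 1))"
  proof (rule suminf_le)
    show "summable (\<lambda>m. row_sum M (A (m + 0 + 1) * Gmat M A ^\<^sub>m m) a)"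
      unfolding row_sum_def using a Umat_summable[of a _ 0] by (intro summable_sum) auto
    show "row_sum M (A (m + 0 + 1) * Gmat M A ^\<^sub>m m) a \<le> jump_prob a (m + 1)" for m
      using A_Gmat_pow_bounds(2)[OF a a] by simp
  qed (rule jump_tail_summable[OF a])
  also have "\<dots> = 1 - jump_prob a 0"
    using suminf_split_head[OF sums_summable[OF jump_prob_sums[OF a]]] jump_prob_sums[OF a] by (simp add: sums_iff)
  finally show ?thesis .
qed

lemma U0_edge: "x < M \<Longrightarrow> y < M \<Longrightarrow> z < M \<Longrightarrow> 0 < A (Suc m) $$ (x, z) \<Longrightarrow> descends m z y \<Longrightarrow>
    (x, y) \<in> pos_graph M (Umat M A 0)"
  unfolding pos_graph_def using Umat_pos_iff[of x y 0] by auto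

lemma first_passage_last_down:
  "first_passage n l i b \<Longrightarrow> 1 \<le> l \<Longrightarrow> \<exists>y q. descends (l - 1) i y \<and> (y, q) \<in> (pos_graph M (Umat M A 0))\<^sup>* \<and> 0 < A 0 $$ (q, b)"
proof (induction rule: first_passage.induct)
  case (down i j)
  then show ?case unfolding descends_def by auto
next
  case (jump i x m l n j)
  have "1 \<le> l + m - 1" using jump(4) by simp
  then obtain y q where yq: "descends (l + m - 1 - 1) x y" "(y, q) \<in> (pos_graph M (Umat M A 0))\<^sup>*"
    "0 < A 0 $$ (q, j)" using jump.IH by blast
  have y: "y < M"
    using yq(1) jump(2) first_passage_bounded unfolding descends_def by (auto split: if_splits)
  show ?case
  proof (cases "l = 1")
    case True
    then obtain m' where "m = Suc m'" using jump(4) by (cases m) auto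
    hence "(i, y) \<in> pos_graph M (Umat M A 0)" using U0_edge[OF jump(1) y jump(2)] jump(3) yq(1) True by simp
    thus ?thesis using yq True unfolding descends_def by (auto intro: converse_rtrancl_into_rtrancl)
  next
    case False
    have "descends (l - 1) i y"
    proof (cases "l = 2 \<and> m = 0")
      case True
      hence "x = y" using yq(1) unfolding descends_def by simp
      thus ?thesis using True descends_down[OF jump(1,2)] jump(3) by simp
    next
      case False
      hence "1 \<le> l - 1" "2 \<le> l - 1 + m" using \<open>l \<noteq> 1\<close> jump.prems by auto
      moreover have "l + m - 1 - 1 = (l - 1) + m - 1" using jump.prems by simp
      ultimately show ?thesis using descends_jump[OF jump(1-3), of "l - 1" y] yq(1) by simp
    qed
    thus ?thesis using yq by blast
  qed
qed

lemma descends_of_U0_path: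
  "(c, q) \<in> (pos_graph M (Umat M A 0))\<^sup>* \<Longrightarrow> q < M \<Longrightarrow> q' < M \<Longrightarrow> 0 < A 0 $$ (q, q') \<Longrightarrow> descends 1 c q'"
proof (induction rule: converse_rtrancl_induct)
  case base
  then show ?case using descends_down by blast
next
  case (step c d)
  hence cd: "c < M" "d < M" "0 < Umat M A 0 $$ (c, d)" unfolding pos_graph_def by auto
  then obtain m x where mx: "x < M" "0 < A (m + 1) $$ (c, x)" "descends m x d" using Umat_pos_iff by auto
  have "descends (m + 1) x q'" using descends_trans[OF mx(3)] step by blast
  thus ?case using descends_jump[OF cd(1) mx(1,2)] by simp
qed

end

subsection \<open>The matrices \<open>R(k)\<close>\<close>

locale mg1_transient = mg1 +
  assumes descends_one: "\<And>i. i < M \<Longrightarrow> \<exists>j. descends 1 i j"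
begin

sublocale U0: transient_substochastic M "Umat M A 0"
proof
  show "substochastic M (Umat M A 0)"
    unfolding substochastic_def using Umat_carrier Umat_nonneg row_sum_Umat0_le jump_prob_nonneg
    by (smt (verit))
  fix a assume a: "a < M"
  obtain b n where "first_passage n 1 a b" using descends_one[OF a] unfolding descends_def by auto
  then obtain q where q: "(a, q) \<in> (pos_graph M (Umat M A 0))\<^sup>*" "0 < A 0 $$ (q, b)" "b < M"
    using first_passage_last_down first_passage_bounded unfolding descends_def by fastforce
  have "q < M" using q(1) a by (cases rule: rtranclE) (auto simp: pos_graph_def)
  hence "row_sum M (Umat M A 0) q < 1"
    using row_sum_Umat0_le A_le_jump_prob[OF _ q(3), of q 0] q(2) by fastforce
  thus "\<exists>q. (a, q) \<in> (pos_graph M (Umat M A 0))\<^sup>* \<and> row_sum M (Umat M A 0) q < 1" using q(1) by blast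
qed

lemma Rmat_eq: "Rmat M A k = Umat M A k * U0.fundamental"
  unfolding Rmat_def U0.mat_inverse_one_minus by simp

lemma index_Rmat: "a < M \<Longrightarrow> b < M \<Longrightarrow> Rmat M A k $$ (a, b) = (\<Sum>c<M. Umat M A k $$ (a, c) * U0.fundamental $$ (c, b))"
  unfolding Rmat_eq by (rule index_mult_mat_square[OF Umat_carrier U0.fundamental_carrier])

lemma Rmat_nonneg: "a < M \<Longrightarrow> b < M \<Longrightarrow> 0 \<le> Rmat M A k $$ (a, b)"
  unfolding index_Rmat using Umat_nonneg U0.fundamental_nonneg by (intro sum_nonneg mult_nonneg_nonneg) auto

lemma Rmat_pos_iff:
  "a < M \<Longrightarrow> b < M \<Longrightarrow>
     0 < Rmat M A k $$ (a, b) \<longleftrightarrow> (\<exists>c<M. 0 < Umat M A k $$ (a, c) \<and> (c, b) \<in> (pos_graph M (Umat M A 0))\<^sup>*)"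
  unfolding Rmat_eq using mult_mat_pos_iff[OF Umat_carrier U0.fundamental_carrier] Umat_nonneg
    U0.fundamental_nonneg U0.fundamental_pos_iff by (simp cong: conj_cong)

lemma Rmat_le_jump_tail:
  "a < M \<Longrightarrow> b < M \<Longrightarrow> Rmat M A k $$ (a, b) \<le> jump_tail a (k + 1) * (\<Sum>c<M. U0.fundamental $$ (c, b))"
  unfolding index_Rmat sum_distrib_left using Umat_le_jump_tail U0.fundamental_nonneg
  by (intro sum_mono mult_right_mono) auto

definition R_step :: "nat \<Rightarrow> nat \<Rightarrow> nat \<Rightarrow> bool" where
  "R_step k a b \<longleftrightarrow> 1 \<le> k \<and> a < M \<and> b < M \<and> 0 < Rmat M A k $$ (a, b)"

definition R_graph :: "(nat \<times> nat) set" where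
  "R_graph = {(a, b). \<exists>k. R_step k a b}"

lemma R_step_iff:
  "R_step k a b \<longleftrightarrow> 1 \<le> k \<and> a < M \<and> b < M \<and>
     (\<exists>c<M. 0 < Umat M A k $$ (a, c) \<and> (c, b) \<in> (pos_graph M (Umat M A 0))\<^sup>*)"
  unfolding R_step_def using Rmat_pos_iff by blast

lemma R_step_of_A:
  assumes "q < M" "q' < M" "0 < A m $$ (q, q')" "2 \<le> m"
  shows "R_step (m - 1) q q'"
proof -
  have "0 < A (0 + (m - 1) + 1) $$ (q, q')" using assms(3,4) by simp
  hence "0 < Umat M A (m - 1) $$ (q, q')" using Umat_pos_iff[OF assms(1,2)] assms(2) by (auto simp: descends_def)
  thus ?thesis unfolding R_step_iff using assms by auto
qed

lemma R_step_U0_edge: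
  assumes "R_step k w q" "(q, q') \<in> pos_graph M (Umat M A 0)"
  shows "R_step k w q'"
proof -
  obtain c where c: "c < M" "0 < Umat M A k $$ (w, c)" "(c, q) \<in> (pos_graph M (Umat M A 0))\<^sup>*"
    using assms(1) unfolding R_step_iff by blast
  have "(c, q') \<in> (pos_graph M (Umat M A 0))\<^sup>*" using rtrancl_into_rtrancl[OF c(3) assms(2)] .
  moreover have "q' < M" using assms(2) unfolding pos_graph_def by simp
  ultimately show ?thesis using assms(1) c(1,2) unfolding R_step_iff by blast
qed

lemma R_step_A1:
  assumes "R_step k w q" "q' < M" "0 < A 1 $$ (q, q')"
  shows "R_step k w q'"
proof -
  have "q < M" using assms(1) unfolding R_step_def by simp
  hence "(q, q') \<in> pos_graph M (Umat M A 0)"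
    using U0_edge[of q q' q' 0] assms(2,3) unfolding descends_def by simp
  thus ?thesis using R_step_U0_edge[OF assms(1)] by blast
qed

lemma R_step_A0:
  assumes step: "R_step k w q" and q': "q' < M" "0 < A 0 $$ (q, q')"
  shows "(2 \<le> k \<and> R_step (k - 1) w q') \<or> (k = 1 \<and> (w, q') \<in> pos_graph M (Umat M A 0))"
proof -
  obtain c where c: "c < M" "0 < Umat M A k $$ (w, c)" "(c, q) \<in> (pos_graph M (Umat M A 0))\<^sup>*"
    and kwq: "1 \<le> k" "w < M" "q < M" using step unfolding R_step_iff by blast
  obtain m x where mx: "x < M" "0 < A (m + k + 1) $$ (w, x)" "descends m x c"
    using c(2) Umat_pos_iff[OF kwq(2) c(1)] by blast
  have "descends (m + 1) x q'" using descends_trans[OF mx(3) descends_of_U0_path[OF c(3) kwq(3) q']] .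
  show ?thesis
  proof (cases "k = 1")
    case True
    thus ?thesis using U0_edge[OF kwq(2) q'(1) mx(1), of "m + 1"] mx(2) \<open>descends (m + 1) x q'\<close> by simp
  next
    case False
    hence "0 < A ((m + 1) + (k - 1) + 1) $$ (w, x)" using mx(2) kwq(1) by simp
    hence "0 < Umat M A (k - 1) $$ (w, q')"
      using Umat_pos_iff[OF kwq(2) q'(1)] mx(1) \<open>descends (m + 1) x q'\<close> by blast
    thus ?thesis unfolding R_step_iff using False kwq q' by auto
  qed
qed

text \<open>\<open>R_path a q L r\<close>: \<open>r\<close> successive \<open>R\<close>-steps lead from phase \<open>a\<close> to phase \<open>q\<close> and raise the level by \<open>L\<close>.\<close>

inductive R_path :: "nat \<Rightarrow> nat \<Rightarrow> nat \<Rightarrow> nat \<Rightarrow> bool" where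
  nil: "a < M \<Longrightarrow> R_path a a 0 0"
| snoc: "R_path a w L r \<Longrightarrow> R_step k w q \<Longrightarrow> R_path a q (L + k) (Suc r)"

lemma R_path_bounded: "R_path a q L r \<Longrightarrow> a < M \<and> q < M"
  by (induction rule: R_path.induct) (auto simp: R_step_def)

lemma R_path_length_le: "R_path a q L r \<Longrightarrow> r \<le> L"
  by (induction rule: R_path.induct) (auto simp: R_step_def)

lemma R_path_append: "R_path b c L2 r2 \<Longrightarrow> R_path a b L1 r1 \<Longrightarrow> R_path a c (L1 + L2) (r1 + r2)"
proof (induction rule: R_path.induct)
  case (snoc b w L r k q)
  then show ?case using R_path.snoc[of a w "L1 + L" "r1 + r" k q] by (simp add: add.assoc)
qed simp

lemma R_path_trancl: "R_path a q L r \<Longrightarrow> 0 < r \<Longrightarrow> (a, q) \<in> R_graph\<^sup>+"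
proof (induction rule: R_path.induct)
  case (snoc a w L r k q)
  hence "(w, q) \<in> R_graph" unfolding R_graph_def by blast
  moreover have "w = a" if "r = 0" using snoc.hyps(1) that by (cases rule: R_path.cases) auto
  ultimately show ?case using snoc by (cases "r = 0") auto
qed simp

lemma trancl_R_path: "(a, q) \<in> R_graph\<^sup>+ \<Longrightarrow> \<exists>L r. R_path a q L (Suc r)"
proof (induction rule: trancl_induct)
  case (base q)
  then obtain k where "R_step k a q" unfolding R_graph_def by blast
  thus ?case using R_path.snoc[OF R_path.nil] unfolding R_step_def by blast
next
  case (step q q')
  then obtain k where "R_step k q q'" unfolding R_graph_def by blast
  thus ?case using step(3) R_path.snoc by blast
qed

lemma R_path_extend:
  assumes path: "R_path a q L (Suc r)" and q': "q' < M" "0 < A m $$ (q, q')" and gain: "2 \<le> L \<or> m \<noteq> 0"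
  shows "\<exists>r'. R_path a q' (L + m - 1) (Suc r')"
proof -
  obtain w L0 k where wk: "R_path a w L0 r" "R_step k w q" "L = L0 + k"
    using path by (cases rule: R_path.cases) auto
  have k: "1 \<le> k" "q < M" using wk(2) unfolding R_step_def by auto
  consider "2 \<le> m" | "m = 1" | "m = 0" by linarith
  thus ?thesis
  proof cases
    case 1
    hence "R_path a q' (L + (m - 1)) (Suc (Suc r))" using R_path.snoc[OF path R_step_of_A[OF k(2) q' 1]] by blast
    thus ?thesis using 1 by auto
  next
    case 2
    thus ?thesis using R_path.snoc[OF wk(1) R_step_A1[OF wk(2) q'(1)]] q'(2) wk(3) by auto
  next
    case 3
    hence "0 < A 0 $$ (q, q')" using q'(2) by simp
    from R_step_A0[OF wk(2) q'(1) this] consider "2 \<le> k" "R_step (k - 1) w q'"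
      | "k = 1" "(w, q') \<in> pos_graph M (Umat M A 0)" by blast
    thus ?thesis
    proof cases
      case 1
      thus ?thesis using R_path.snoc[OF wk(1) 1(2)] wk(3) 3 by auto
    next
      case 2
      then obtain r' where "r = Suc r'" using wk(1) gain 3 wk(3)
        by (cases r) (auto elim: R_path.cases)
      hence "R_path a w L0 (Suc r')" using wk(1) by simp
      then obtain w' L1 k' where w': "R_path a w' L1 r'" "R_step k' w' w" "L0 = L1 + k'"
        by (cases rule: R_path.cases) auto
      thus ?thesis using R_path.snoc[OF w'(1) R_step_U0_edge[OF w'(2) 2(2)]] wk(3) 2(1) 3 by auto
    qed
  qed
qed

end

locale mg1_light_tailed = mg1_transient +
  fixes \<theta> :: real
  assumes theta_gt_1: "1 < \<theta>"
    and A_theta_summable: "\<And>i j. i < M \<Longrightarrow> j < M \<Longrightarrow> summable (\<lambda>k. \<theta> ^ k * A k $$ (i, j))"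
begin

lemma theta_jump_prob_summable: "i < M \<Longrightarrow> summable (\<lambda>m. \<theta> ^ m * jump_prob i m)"
  unfolding jump_prob_def sum_distrib_left using A_theta_summable by (intro summable_sum) auto

lemma jump_tail_le: "i < M \<Longrightarrow> jump_tail i n * \<theta> ^ n \<le> (\<Sum>m. \<theta> ^ m * jump_prob i m)"
proof -
  assume i: "i < M"
  have \<theta>: "0 < \<theta>" using theta_gt_1 by simp
  have shifted: "summable (\<lambda>m. \<theta> ^ (m + n) * jump_prob i (m + n))"
    using summable_ignore_initial_segment[OF theta_jump_prob_summable[OF i]] .
  have "jump_tail i n * \<theta> ^ n = (\<Sum>m. jump_prob i (m + n) * \<theta> ^ n)"
    unfolding jump_tail_def using jump_tail_summable[OF i] by (rule suminf_mult2)
  also have "\<dots> \<le> (\<Sum>m. \<theta> ^ (m + n) * jump_prob i (m + n))"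
  proof (rule suminf_le[OF _ summable_mult2[OF jump_tail_summable[OF i]] shifted])
    show "jump_prob i (m + n) * \<theta> ^ n \<le> \<theta> ^ (m + n) * jump_prob i (m + n)" for m
    proof -
      have "\<theta> ^ n \<le> \<theta> ^ (m + n)" using theta_gt_1 by (intro power_increasing) auto
      thus ?thesis using mult_left_mono[OF _ jump_prob_nonneg[OF i]] by (simp add: mult.commute)
    qed
  qed
  also have "\<dots> \<le> (\<Sum>m. \<theta> ^ m * jump_prob i m)"
    using suminf_split_initial_segment[OF theta_jump_prob_summable[OF i], of n] jump_prob_nonneg[OF i] \<theta>
    by (simp add: sum_nonneg)
  finally show ?thesis .
qed

lemma jump_tail_shift_summable: "i < M \<Longrightarrow> summable (\<lambda>k. jump_tail i (k + n))"
proof -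
  assume i: "i < M"
  define C where "C = (\<Sum>m. \<theta> ^ m * jump_prob i m)"
  have "norm (inverse \<theta>) < 1" using theta_gt_1 by (simp add: inverse_less_1_iff)
  hence "summable (\<lambda>k. C * inverse \<theta> ^ (k + n))"
    by (intro summable_mult summable_ignore_initial_segment summable_geometric)
  moreover have "norm (jump_tail i (k + n)) \<le> C * inverse \<theta> ^ (k + n)" for k
  proof -
    have "0 \<le> jump_tail i (k + n)"
      unfolding jump_tail_def using jump_tail_summable[OF i] jump_prob_nonneg[OF i] by (intro suminf_nonneg) auto
    moreover have "jump_tail i (k + n) \<le> C * inverse \<theta> ^ (k + n)"
      using jump_tail_le[OF i, of "k + n"] theta_gt_1 unfolding C_def
      by (simp add: field_simps power_inverse)
    ultimately show ?thesis by simp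
  qed
  ultimately show ?thesis by (rule summable_comparison_test'[where N = 0])
qed

lemma index_Rstar1: "a < M \<Longrightarrow> b < M \<Longrightarrow> Rstar1 M A $$ (a, b) = (\<Sum>k. Rmat M A (Suc k) $$ (a, b))"
  unfolding Rstar1_def msuminf_def by simp

lemma Rmat_summable: "a < M \<Longrightarrow> b < M \<Longrightarrow> summable (\<lambda>k. Rmat M A (Suc k) $$ (a, b))"
proof (rule summable_comparison_test'[where N = 0])
  assume ab: "a < M" "b < M"
  show "summable (\<lambda>k. jump_tail a (k + 2) * (\<Sum>c<M. U0.fundamental $$ (c, b)))"
    using jump_tail_shift_summable[OF ab(1)] by (rule summable_mult2)
  show "norm (Rmat M A (Suc k) $$ (a, b)) \<le> jump_tail a (k + 2) * (\<Sum>c<M. U0.fundamental $$ (c, b))" for k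
    using Rmat_nonneg[OF ab] Rmat_le_jump_tail[OF ab, of "Suc k"] by simp
qed

lemma Rstar1_nonneg: "a < M \<Longrightarrow> b < M \<Longrightarrow> 0 \<le> Rstar1 M A $$ (a, b)"
  unfolding index_Rstar1 using Rmat_summable Rmat_nonneg by (intro suminf_nonneg) auto

lemma pos_graph_Rstar1: "pos_graph M (Rstar1 M A) = R_graph"
proof -
  have "0 < Rstar1 M A $$ (a, b) \<longleftrightarrow> (\<exists>k. R_step k a b)" if "a < M" "b < M" for a b
  proof -
    have "0 < Rstar1 M A $$ (a, b) \<longleftrightarrow> (\<exists>k. 0 < Rmat M A (Suc k) $$ (a, b))"
      unfolding index_Rstar1[OF that] using Rmat_summable[OF that] Rmat_nonneg[OF that]
      by (intro suminf_pos_iff) auto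
    also have "\<dots> \<longleftrightarrow> (\<exists>k. R_step k a b)"
    proof
      assume "\<exists>k. 0 < Rmat M A (Suc k) $$ (a, b)"
      then obtain k where "0 < Rmat M A (Suc k) $$ (a, b)" ..
      hence "R_step (Suc k) a b" using that unfolding R_step_def by simp
      thus "\<exists>k. R_step k a b" ..
    next
      assume "\<exists>k. R_step k a b"
      then obtain k where k: "R_step k a b" ..
      then obtain k' where "k = Suc k'" unfolding R_step_def by (cases k) auto
      thus "\<exists>k. 0 < Rmat M A (Suc k) $$ (a, b)" using k unfolding R_step_def by blast
    qed
    finally show ?thesis .
  qed
  thus ?thesis unfolding pos_graph_def R_graph_def R_step_def by blast
qed

end

subsection \<open>A level potential forces zero drift\<close>

context mg1
begin

lemma index_msuminf_A: "i < M \<Longrightarrow> j < M \<Longrightarrow> msuminf M A $$ (i, j) = (\<Sum>k. A k $$ (i, j))"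
  unfolding msuminf_def by simp

lemma msuminf_A_nonneg: "i < M \<Longrightarrow> j < M \<Longrightarrow> 0 \<le> msuminf M A $$ (i, j)"
  unfolding index_msuminf_A using A_summable A_nonneg by (intro suminf_nonneg) auto

lemma msuminf_A_row_sum: "i < M \<Longrightarrow> (\<Sum>j<M. msuminf M A $$ (i, j)) = 1"
  using A_stochastic by (simp add: index_msuminf_A)

lemma drift_eq_one:
  fixes \<phi> :: "nat \<Rightarrow> nat" and \<pi> :: "nat \<Rightarrow> real"
  assumes tight: "\<And>k i j. i < M \<Longrightarrow> j < M \<Longrightarrow> 0 < A k $$ (i, j) \<Longrightarrow> k + \<phi> i = \<phi> j + 1"
    and stationary: "\<And>j. j < M \<Longrightarrow> (\<Sum>i<M. \<pi> i * msuminf M A $$ (i, j)) = \<pi> j"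
    and normalized: "(\<Sum>i<M. \<pi> i) = 1"
  shows "(\<Sum>i<M. \<pi> i * (\<Sum>k. real k * (\<Sum>j<M. A k $$ (i, j)))) = 1"
proof -
  define P where "P i j = msuminf M A $$ (i, j)" for i j
  have row: "(\<Sum>k. real k * (\<Sum>j<M. A k $$ (i, j))) = (\<Sum>j<M. (1 + real (\<phi> j) - real (\<phi> i)) * P i j)"
    if i: "i < M" for i
  proof -
    have "real k * A k $$ (i, j) = (1 + real (\<phi> j) - real (\<phi> i)) * A k $$ (i, j)" if "j < M" for k j
      using tight[OF i that, of k] A_nonneg[OF i that, of k] by (cases "A k $$ (i, j) = 0") auto
    hence "real k * (\<Sum>j<M. A k $$ (i, j)) = (\<Sum>j<M. (1 + real (\<phi> j) - real (\<phi> i)) * A k $$ (i, j))" for k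
      unfolding sum_distrib_left by (intro sum.cong refl) auto
    hence "(\<Sum>k. real k * (\<Sum>j<M. A k $$ (i, j))) = (\<Sum>k. \<Sum>j<M. (1 + real (\<phi> j) - real (\<phi> i)) * A k $$ (i, j))"
      by simp
    also have "\<dots> = (\<Sum>j<M. \<Sum>k. (1 + real (\<phi> j) - real (\<phi> i)) * A k $$ (i, j))"
      using A_summable[OF i] by (intro suminf_sum summable_mult) auto
    also have "\<dots> = (\<Sum>j<M. (1 + real (\<phi> j) - real (\<phi> i)) * P i j)"
      unfolding P_def using A_summable[OF i] i by (intro sum.cong refl) (simp add: index_msuminf_A suminf_mult)
    finally show ?thesis .
  qed
  have "(\<Sum>i<M. \<pi> i * (\<Sum>j<M. (1 + real (\<phi> j) - real (\<phi> i)) * P i j))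
      = (\<Sum>i<M. \<pi> i * (\<Sum>j<M. P i j) + (\<Sum>j<M. \<pi> i * P i j * real (\<phi> j))
          - \<pi> i * real (\<phi> i) * (\<Sum>j<M. P i j))"
    by (intro sum.cong refl) (simp add: algebra_simps sum.distrib sum_subtractf sum_distrib_left)
  also have "\<dots> = (\<Sum>i<M. \<pi> i) + (\<Sum>i<M. \<Sum>j<M. \<pi> i * P i j * real (\<phi> j)) - (\<Sum>i<M. \<pi> i * real (\<phi> i))"
    using msuminf_A_row_sum unfolding P_def by (simp add: sum.distrib sum_subtractf)
  also have "(\<Sum>i<M. \<Sum>j<M. \<pi> i * P i j * real (\<phi> j)) = (\<Sum>j<M. (\<Sum>i<M. \<pi> i * P i j) * real (\<phi> j))"
    by (subst sum.swap) (simp add: sum_distrib_right)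
  also have "\<dots> = (\<Sum>j<M. \<pi> j * real (\<phi> j))" using stationary unfolding P_def by simp
  finally show ?thesis using row normalized by simp
qed

context
  fixes \<theta> :: real and \<phi> :: "nat \<Rightarrow> nat"
  assumes theta_gt_1: "1 < \<theta>"
    and A_theta_summable: "\<And>i j. i < M \<Longrightarrow> j < M \<Longrightarrow> summable (\<lambda>k. \<theta> ^ k * A k $$ (i, j))"
    and potential: "\<And>p q m. p < M \<Longrightarrow> q < M \<Longrightarrow> 0 < A m $$ (p, q) \<Longrightarrow> m + \<phi> p \<le> \<phi> q + 1"
begin

definition potential_gap :: "nat \<Rightarrow> nat \<Rightarrow> nat \<Rightarrow> real" where
  "potential_gap i j k = (\<theta> ^ (\<phi> j + 1) - \<theta> ^ (k + \<phi> i)) * A k $$ (i, j)"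

lemma index_Astar: "i < M \<Longrightarrow> j < M \<Longrightarrow> Astar M A \<theta> $$ (i, j) = (\<Sum>k. \<theta> ^ k * A k $$ (i, j))"
proof -
  assume ij: "i < M" "j < M"
  have "(\<theta> ^ k \<cdot>\<^sub>m A k) $$ (i, j) = \<theta> ^ k * A k $$ (i, j)" for k
    using dim_A[of k] ij by (intro index_smult_mat(1)) auto
  thus ?thesis unfolding Astar_def msuminf_def using ij by simp
qed

lemma potential_gap_nonneg:
  assumes "i < M" "j < M"
  shows "0 \<le> potential_gap i j k"
proof (cases "A k $$ (i, j) = 0")
  case False
  hence "\<theta> ^ (k + \<phi> i) \<le> \<theta> ^ (\<phi> j + 1)"
    using potential[OF assms] A_nonneg[OF assms, of k] theta_gt_1 by (intro power_increasing) auto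
  thus ?thesis unfolding potential_gap_def using A_nonneg[OF assms, of k] by simp
qed (simp add: potential_gap_def)

lemma potential_gap_sums:
  assumes "i < M" "j < M"
  shows "potential_gap i j sums (\<theta> ^ (\<phi> j + 1) * msuminf M A $$ (i, j) - Astar M A \<theta> $$ (i, j) * \<theta> ^ \<phi> i)"
proof -
  have "(\<lambda>k. \<theta> ^ (\<phi> j + 1) * A k $$ (i, j)) sums (\<theta> ^ (\<phi> j + 1) * msuminf M A $$ (i, j))"
    unfolding index_msuminf_A[OF assms] using A_summable[OF assms] by (intro sums_mult summable_sums)
  moreover have "(\<lambda>k. \<theta> ^ k * A k $$ (i, j) * \<theta> ^ \<phi> i) sums (Astar M A \<theta> $$ (i, j) * \<theta> ^ \<phi> i)"
    unfolding index_Astar[OF assms] using A_theta_summable[OF assms] by (intro sums_mult2 summable_sums)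
  ultimately show ?thesis
    unfolding potential_gap_def by (simp add: sums_diff algebra_simps power_add)
qed

lemma Astar_scaled_le: "i < M \<Longrightarrow> j < M \<Longrightarrow> Astar M A \<theta> $$ (i, j) * \<theta> ^ \<phi> i \<le> \<theta> ^ (\<phi> j + 1) * msuminf M A $$ (i, j)"
  using sums_le[OF potential_gap_nonneg sums_zero potential_gap_sums] by simp

lemma potential_gap_zero_imp_tight:
  assumes "i < M" "j < M" "Astar M A \<theta> $$ (i, j) * \<theta> ^ \<phi> i = \<theta> ^ (\<phi> j + 1) * msuminf M A $$ (i, j)"
    and "0 < A k $$ (i, j)"
  shows "k + \<phi> i = \<phi> j + 1"
proof -
  have sums: "potential_gap i j sums 0" using potential_gap_sums[OF assms(1,2)] assms(3) by simp
  hence "\<not> (\<exists>n. 0 < potential_gap i j n)"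
    using suminf_pos_iff[OF sums_summable[OF sums] potential_gap_nonneg[OF assms(1,2)]] sums_unique[OF sums] by simp
  hence "potential_gap i j k \<le> 0" by (simp add: not_less)
  hence "potential_gap i j k = 0" using potential_gap_nonneg[OF assms(1,2), of k] by simp
  hence "\<theta> ^ (\<phi> j + 1) = \<theta> ^ (k + \<phi> i)" using assms(4) unfolding potential_gap_def by simp
  thus ?thesis using power_inject_exp[OF theta_gt_1, of "\<phi> j + 1" "k + \<phi> i"] by simp
qed

lemma Astar_nonneg: "i < M \<Longrightarrow> j < M \<Longrightarrow> 0 \<le> Astar M A \<theta> $$ (i, j)"
  unfolding index_Astar using A_theta_summable A_nonneg theta_gt_1 by (intro suminf_nonneg) auto

context
  fixes v :: "complex vec"
  assumes irred_A: "irred_mat (msuminf M A)"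
    and v: "v \<in> carrier_vec M" "v \<noteq> 0\<^sub>v M"
    and eigen: "map_mat complex_of_real (Astar M A \<theta>) *\<^sub>v v = complex_of_real \<theta> \<cdot>\<^sub>v v"
begin

definition weighted_norm :: "nat \<Rightarrow> real" where
  "weighted_norm j = cmod (v $ j) * \<theta> ^ \<phi> j"

lemma eigenvector_row_le: "i < M \<Longrightarrow> \<theta> * cmod (v $ i) \<le> (\<Sum>j<M. Astar M A \<theta> $$ (i, j) * cmod (v $ j))"
proof -
  assume i: "i < M"
  have "complex_of_real \<theta> * v $ i = (\<Sum>j<M. complex_of_real (Astar M A \<theta> $$ (i, j)) * v $ j)"
    using arg_cong[OF eigen, of "\<lambda>w. w $ i"] v(1) i Astar_def
    by (simp add: msuminf_def scalar_prod_def atLeast0LessThan)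
  hence "cmod (complex_of_real \<theta> * v $ i) = cmod (\<Sum>j<M. complex_of_real (Astar M A \<theta> $$ (i, j)) * v $ j)"
    by (rule arg_cong)
  hence "\<theta> * cmod (v $ i) = cmod (\<Sum>j<M. complex_of_real (Astar M A \<theta> $$ (i, j)) * v $ j)"
    using theta_gt_1 by (simp add: norm_mult)
  also have "\<dots> \<le> (\<Sum>j<M. cmod (complex_of_real (Astar M A \<theta> $$ (i, j)) * v $ j))" by (rule norm_sum)
  also have "\<dots> = (\<Sum>j<M. Astar M A \<theta> $$ (i, j) * cmod (v $ j))"
    using Astar_nonneg i by (intro sum.cong refl) (simp add: norm_mult)
  finally show ?thesis .
qed

lemma weighted_norm_gap:
  assumes i: "i < M"
  shows "(\<Sum>j<M. (\<theta> ^ (\<phi> j + 1) * msuminf M A $$ (i, j) - Astar M A \<theta> $$ (i, j) * \<theta> ^ \<phi> i) * cmod (v $ j))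
    \<le> \<theta> * ((\<Sum>j<M. msuminf M A $$ (i, j) * weighted_norm j) - weighted_norm i)"
proof -
  have "\<theta> * weighted_norm i \<le> \<theta> ^ \<phi> i * (\<Sum>j<M. Astar M A \<theta> $$ (i, j) * cmod (v $ j))"
    using eigenvector_row_le[OF i] theta_gt_1 unfolding weighted_norm_def
    by (simp add: mult_left_mono mult.left_commute[of \<theta>] mult.commute[of _ "\<theta> ^ \<phi> i"])
  thus ?thesis unfolding weighted_norm_def
    by (simp add: algebra_simps sum_subtractf sum_distrib_left power_add)
qed

lemma weighted_norm_const: "j < M \<Longrightarrow> weighted_norm j = Max (weighted_norm ` {..<M})"
proof (rule subinvariant_const_of_irred[where P = "\<lambda>i j. msuminf M A $$ (i, j)"])
  show "irred M (\<lambda>i j. msuminf M A $$ (i, j))" using irred_A unfolding irred_mat_def msuminf_def by simp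
  show "weighted_norm i \<le> (\<Sum>j<M. msuminf M A $$ (i, j) * weighted_norm j)" if i: "i < M" for i
  proof -
    have "0 \<le> (\<Sum>j<M. (\<theta> ^ (\<phi> j + 1) * msuminf M A $$ (i, j) - Astar M A \<theta> $$ (i, j) * \<theta> ^ \<phi> i) * cmod (v $ j))"
      using Astar_scaled_le[OF i] by (intro sum_nonneg mult_nonneg_nonneg) auto
    hence "0 \<le> \<theta> * ((\<Sum>j<M. msuminf M A $$ (i, j) * weighted_norm j) - weighted_norm i)"
      using weighted_norm_gap[OF i] by linarith
    thus ?thesis using theta_gt_1 by (simp add: zero_le_mult_iff)
  qed
qed (use msuminf_A_nonneg msuminf_A_row_sum in auto)

lemma weighted_norm_pos: "j < M \<Longrightarrow> 0 < weighted_norm j"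
proof -
  assume j: "j < M"
  obtain i where i: "i < M" "v $ i \<noteq> 0" using v by (metis eq_vecI carrier_vecD index_zero_vec)
  hence "0 < weighted_norm i" unfolding weighted_norm_def using theta_gt_1 by simp
  thus ?thesis using weighted_norm_const[OF i(1)] weighted_norm_const[OF j] by simp
qed

lemma eigenvector_potential_tight:
  assumes ij: "i < M" "j < M" and pos: "0 < A k $$ (i, j)"
  shows "k + \<phi> i = \<phi> j + 1"
proof -
  define gap where "gap l = (\<theta> ^ (\<phi> l + 1) * msuminf M A $$ (i, l) - Astar M A \<theta> $$ (i, l) * \<theta> ^ \<phi> i) * cmod (v $ l)" for l
  have gap_nonneg: "0 \<le> gap l" if "l < M" for l
    unfolding gap_def using Astar_scaled_le[OF ij(1) that] by simp
  have "(\<Sum>l<M. msuminf M A $$ (i, l) * weighted_norm l) = weighted_norm i"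
    using weighted_norm_const ij(1) msuminf_A_row_sum[OF ij(1)] by (simp add: sum_distrib_right[symmetric])
  hence "(\<Sum>l<M. gap l) = 0"
    using weighted_norm_gap[OF ij(1)] gap_nonneg unfolding gap_def by (intro antisym sum_nonneg) auto
  hence "gap j = 0" using gap_nonneg ij(2) by (subst (asm) sum_nonneg_eq_0_iff) auto
  moreover have "0 < cmod (v $ j)" using weighted_norm_pos[OF ij(2)] unfolding weighted_norm_def
    by (simp add: zero_less_mult_iff)
  ultimately have "Astar M A \<theta> $$ (i, j) * \<theta> ^ \<phi> i = \<theta> ^ (\<phi> j + 1) * msuminf M A $$ (i, j)"
    unfolding gap_def by simp
  thus ?thesis using potential_gap_zero_imp_tight[OF ij] pos by blast
qed

end

end

end

subsection \<open>Irreducible phase process\<close>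

locale mg1_irreducible = mg1_light_tailed +
  assumes irred_A: "irred_mat (msuminf M A)"
begin

lemma A_graph_trancl: "i < M \<Longrightarrow> j < M \<Longrightarrow> (i, j) \<in> (pos_graph M (msuminf M A))\<^sup>+"
  using irred_A irred_mat_iff_pos_graph[of "msuminf M A" M] unfolding msuminf_def by simp

lemma A_graph_edge: "(x, y) \<in> pos_graph M (msuminf M A) \<Longrightarrow> \<exists>m. 0 < A m $$ (x, y)"
  unfolding pos_graph_def msuminf_def using A_summable A_nonneg by (auto simp: suminf_pos_iff)

lemma R_path_walk:
  "(q, q') \<in> pos_graph M (msuminf M A) ^^ t \<Longrightarrow> R_path a q L (Suc r) \<Longrightarrow> t + 2 \<le> L \<Longrightarrow>
     \<exists>L' r'. R_path a q' L' (Suc r') \<and> L \<le> L' + t"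
proof (induction t arbitrary: q')
  case (Suc t)
  from Suc.prems(1) obtain y where y: "(q, y) \<in> pos_graph M (msuminf M A) ^^ t" "(y, q') \<in> pos_graph M (msuminf M A)"
    by auto
  from Suc.IH[OF y(1) Suc.prems(2)] Suc.prems(3) obtain L' r' where L': "R_path a y L' (Suc r')" "L \<le> L' + t"
    by auto
  obtain m where m: "0 < A m $$ (y, q')" using A_graph_edge[OF y(2)] by blast
  have "q' < M" "2 \<le> L'" using y(2) L'(2) Suc.prems(3) unfolding pos_graph_def by auto
  then obtain r'' where "R_path a q' (L' + m - 1) (Suc r'')" using R_path_extend[OF L'(1) _ m] by blast
  moreover have "L \<le> (L' + m - 1) + Suc t" using L'(2) by simp
  ultimately show ?case by blast
next
  case 0
  thus ?case by auto
qed

lemma R_path_repeat: "R_path i i L (Suc r) \<Longrightarrow> R_path i i (Suc n * L) (Suc n * Suc r)"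
proof (induction n)
  case (Suc n)
  from R_path_append[OF Suc.prems Suc.IH[OF Suc.prems]] show ?case by (simp add: algebra_simps)
qed simp

lemma cyclic_reaches_all:
  assumes "(i, i) \<in> R_graph\<^sup>+" "j < M"
  shows "(i, j) \<in> R_graph\<^sup>+"
proof -
  obtain L r where path: "R_path i i L (Suc r)" using trancl_R_path[OF assms(1)] by blast
  have "i < M" "1 \<le> L" using R_path_bounded[OF path] R_path_length_le[OF path] by auto
  obtain t where t: "(i, j) \<in> pos_graph M (msuminf M A) ^^ t"
    using A_graph_trancl[OF \<open>i < M\<close> assms(2)] trancl_power by blast
  have "R_path i i (Suc (t + 1) * L) (Suc (r + (t + 1) * Suc r))"
    using R_path_repeat[OF path, of "t + 1"] by (simp add: algebra_simps)
  moreover have "t + 2 \<le> Suc (t + 1) * L" using mult_le_mono2[OF \<open>1 \<le> L\<close>, of "Suc (t + 1)"] by simp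
  ultimately obtain L' r' where "R_path i j L' (Suc r')" using R_path_walk[OF t] by blast
  thus ?thesis using R_path_trancl by blast
qed

lemma acyclic_R_path_gain_bounded:
  assumes acyclic: "\<And>a. a < M \<Longrightarrow> (a, a) \<notin> R_graph\<^sup>+"
  shows "\<exists>B. \<forall>a q L r. R_path a q L (Suc r) \<longrightarrow> L < B"
proof -
  define t where "t qa = (SOME t. qa \<in> pos_graph M (msuminf M A) ^^ t)" for qa
  have t: "(q, a) \<in> pos_graph M (msuminf M A) ^^ t (q, a)" if "q < M" "a < M" for q a
  proof -
    have "\<exists>t. (q, a) \<in> pos_graph M (msuminf M A) ^^ t" using A_graph_trancl[OF that] trancl_power by blast
    thus ?thesis unfolding t_def by (rule someI_ex)
  qed
  define B where "B = Max (t ` ({..<M} \<times> {..<M})) + 2"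
  have "L < B" if path: "R_path a q L (Suc r)" for a q L r
  proof (rule ccontr)
    have aq: "a < M" "q < M" using R_path_bounded[OF path] by auto
    assume "\<not> L < B"
    moreover have "t (q, a) \<le> Max (t ` ({..<M} \<times> {..<M}))" using aq by (intro Max_ge) auto
    ultimately have "t (q, a) + 2 \<le> L" unfolding B_def by linarith
    then obtain L' r' where "R_path a a L' (Suc r')" using R_path_walk[OF t[OF aq(2,1)] path] by blast
    thus False using acyclic[OF aq(1)] R_path_trancl by blast
  qed
  thus ?thesis by blast
qed

lemma acyclic_level_potential:
  assumes acyclic: "\<And>a. a < M \<Longrightarrow> (a, a) \<notin> R_graph\<^sup>+"
  shows "\<exists>\<phi>. \<forall>p q m. p < M \<longrightarrow> q < M \<longrightarrow> 0 < A m $$ (p, q) \<longrightarrow> m + \<phi> p \<le> \<phi> q + 1"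
proof -
  obtain B where B: "\<And>a q L r. R_path a q L (Suc r) \<Longrightarrow> L < B"
    using acyclic_R_path_gain_bounded[OF acyclic] by blast
  define gains where "gains q = {0} \<union> {L. \<exists>a r. R_path a q L (Suc r)}" for q
  define \<phi> where "\<phi> q = Max (gains q)" for q
  have fin: "finite (gains q)" for q
  proof -
    have "gains q \<subseteq> {..B}" unfolding gains_def using B by (auto intro: less_imp_le)
    thus ?thesis using finite_subset by blast
  qed
  have \<phi>_ge: "L \<le> \<phi> q" if "R_path a q L (Suc r)" for a q L r
    unfolding \<phi>_def using fin that by (intro Max_ge) (auto simp: gains_def)
  have \<phi>_mem: "\<exists>a r. R_path a q (\<phi> q) (Suc r)" if "\<phi> q \<noteq> 0" for q
    using Max_in[OF fin, of q] that unfolding \<phi>_def gains_def by auto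
  have "m + \<phi> p \<le> \<phi> q + 1" if pq: "p < M" "q < M" "0 < A m $$ (p, q)" for p q m
  proof (cases "\<phi> p = 0")
    case True
    show ?thesis
    proof (cases "2 \<le> m")
      case m: True
      have "R_path p q (0 + (m - 1)) (Suc 0)" using R_path.snoc[OF R_path.nil[OF pq(1)] R_step_of_A[OF pq m]] .
      thus ?thesis using \<phi>_ge True m by fastforce
    qed (use True in simp)
  next
    case False
    then obtain a r where path: "R_path a p (\<phi> p) (Suc r)" using \<phi>_mem by blast
    show ?thesis
    proof (cases "m = 0 \<and> \<phi> p = 1")
      case False
      hence "2 \<le> \<phi> p \<or> m \<noteq> 0" using \<open>\<phi> p \<noteq> 0\<close> by auto
      then obtain r' where "R_path a q (\<phi> p + m - 1) (Suc r')" using R_path_extend[OF path pq(2,3)] by blast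
      thus ?thesis using \<phi>_ge \<open>\<phi> p \<noteq> 0\<close> by fastforce
    qed simp
  qed
  thus ?thesis by blast
qed

end

lemma (in mg1) Tmat_edge_from_level_two:
  assumes e: "(s, s') \<in> {(a, b). a \<in> states M0 M \<and> b \<in> states M0 M \<and> Tmat A B C0 a b > 0}"
    and k: "2 \<le> fst s"
  shows "fst s - 1 \<le> fst s' \<and> snd s < M \<and> snd s' < M \<and> 0 < A (fst s' + 1 - fst s) $$ (snd s, snd s')"
proof -
  obtain k i l j where s: "s = (k, i)" "s' = (l, j)" by (cases s, cases s') auto
  have st: "(k, i) \<in> states M0 M" "(l, j) \<in> states M0 M" "0 < Tmat A B C0 (k, i) (l, j)" using e s by auto
  have "k - 1 \<le> l" using st(3) k s by (auto split: if_splits)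
  moreover have "i < M" "j < M" using st(1,2) k s \<open>k - 1 \<le> l\<close> unfolding states_def by auto
  ultimately show ?thesis using s st(3) k by simp
qed

lemma (in mg1) Tmat_path_first_passage:
  assumes "(s, t) \<in> {(a, b). a \<in> states M0 M \<and> b \<in> states M0 M \<and> Tmat A B C0 a b > 0}\<^sup>+"
  shows "2 \<le> L \<Longrightarrow> L \<le> fst s \<Longrightarrow> fst t < L \<Longrightarrow> \<exists>n b. first_passage n (fst s - L + 1) (snd s) b"
  using assms
proof (induction arbitrary: L rule: converse_trancl_induct)
  case (base s)
  from Tmat_edge_from_level_two[OF base.hyps] base.prems have "fst t = fst s - 1" "L = fst s"
    "snd s < M" "snd t < M" "0 < A 0 $$ (snd s, snd t)" by auto
  hence "first_passage (Suc 0) (fst s - L + 1) (snd s) (snd t)" using first_passage.down by simp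
  thus ?case by blast
next
  case (step s s')
  from Tmat_edge_from_level_two[OF step.hyps(1)] step.prems(1,2) have e: "fst s - 1 \<le> fst s'" "snd s < M"
    "snd s' < M" "0 < A (fst s' + 1 - fst s) $$ (snd s, snd s')" by auto
  show ?case
  proof (cases "fst s' < L")
    case True
    hence "fst s - L + 1 = 1" "fst s' + 1 - fst s = 0" using e(1) step.prems(1,2) by auto
    hence "first_passage (Suc 0) (fst s - L + 1) (snd s) (snd s')" using first_passage.down[OF e(2,3)] e(4) by simp
    thus ?thesis by blast
  next
    case False
    then obtain n b where "first_passage n (fst s' - L + 1) (snd s') b" using step.IH step.prems(1,3) by fastforce
    moreover have "2 \<le> (fst s - L + 1) + (fst s' + 1 - fst s)" "(fst s - L + 1) + (fst s' + 1 - fst s) - 1 = fst s' - L + 1"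
      using False e(1) step.prems(1,2) by auto
    ultimately show ?thesis using first_passage.jump[OF e(2,3,4)] by fastforce
  qed
qed

lemma (in mg1) descends_one_of_irred_T:
  assumes "irred_T M0 M (Tmat A B C0)" "0 < M0" "i < M"
  shows "\<exists>j. descends 1 i j"
proof -
  have "(2, i) \<in> states M0 M" "(0, 0) \<in> states M0 M" unfolding states_def using assms(2,3) by auto
  hence "((2, i), (0, 0)) \<in> {(a, b). a \<in> states M0 M \<and> b \<in> states M0 M \<and> Tmat A B C0 a b > 0}\<^sup>+"
    using assms(1) unfolding irred_T_def by blast
  from Tmat_path_first_passage[OF this, of 2] show ?thesis unfolding descends_def by auto
qed

lemma summable_power_of_conv_radius_A:
  fixes A :: "nat \<Rightarrow> real mat"
  assumes "0 < \<theta>" "ereal \<theta> < conv_radius_A M A" "i < M" "j < M"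
  shows "summable (\<lambda>k. \<theta> ^ k * A k $$ (i, j))"
proof -
  have "conv_radius_A M A \<le> conv_radius (\<lambda>k. A k $$ (i, j))"
    unfolding conv_radius_A_def using assms(3,4) by (intro INF_lower) auto
  hence "ereal (norm \<theta>) < conv_radius (\<lambda>k. A k $$ (i, j))" using assms(1,2) by simp
  from summable_in_conv_radius[OF this] show ?thesis by (simp add: mult.commute)
qed

context mg1_irreducible
begin

lemma cyclic_phase_exists:
  fixes v :: "complex vec" and \<pi> :: "nat \<Rightarrow> real"
  assumes v: "v \<in> carrier_vec M" "v \<noteq> 0\<^sub>v M"
    and eigen: "map_mat complex_of_real (Astar M A \<theta>) *\<^sub>v v = complex_of_real \<theta> \<cdot>\<^sub>v v"
    and stationary: "\<And>j. j < M \<Longrightarrow> (\<Sum>i<M. \<pi> i * msuminf M A $$ (i, j)) = \<pi> j"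
    and normalized: "(\<Sum>i<M. \<pi> i) = 1"
    and drift: "(\<Sum>i<M. \<pi> i * (\<Sum>k. real k * (\<Sum>j<M. A k $$ (i, j)))) < 1"
  shows "\<exists>i<M. (i, i) \<in> R_graph\<^sup>+"
proof (rule ccontr)
  assume "\<not> (\<exists>i<M. (i, i) \<in> R_graph\<^sup>+)"
  then obtain \<phi> where potential: "\<And>p q m. p < M \<Longrightarrow> q < M \<Longrightarrow> 0 < A m $$ (p, q) \<Longrightarrow> m + \<phi> p \<le> \<phi> q + 1"
    using acyclic_level_potential by blast
  have "\<And>k i j. i < M \<Longrightarrow> j < M \<Longrightarrow> 0 < A k $$ (i, j) \<Longrightarrow> k + \<phi> i = \<phi> j + 1"
    using eigenvector_potential_tight[where \<theta> = \<theta> and \<phi> = \<phi> and v = v,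
        OF theta_gt_1 A_theta_summable potential irred_A v eigen] by blast
  from drift_eq_one[OF this stationary normalized] show False using drift by simp
qed

lemma Rstar1_block_form:
  assumes cyclic: "\<exists>i<M. (i, i) \<in> R_graph\<^sup>+"
  shows "\<exists>p m. p permutes {..<M} \<and> 0 < m \<and> m \<le> M \<and>
     (\<forall>i j. m \<le> i \<and> i < M \<and> j < m \<longrightarrow> Rstar1 M A $$ (p i, p j) = 0) \<and>
     irred m (\<lambda>i j. Rstar1 M A $$ (p i, p j)) \<and>
     (\<forall>i j. m \<le> j \<and> j \<le> i \<and> i < M \<longrightarrow> Rstar1 M A $$ (p i, p j) = 0)"
proof -
  define D where "D = {i. i < M \<and> (i, i) \<in> R_graph\<^sup>+}"
  have bounded: "a < M" "b < M" if "(a, b) \<in> R_graph" for a b using that unfolding R_graph_def R_step_def by auto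
  have closed: "x \<in> D" if "(x, y) \<in> R_graph" "y \<in> D" for x y
    using cyclic_reaches_all[of y x] that bounded[OF that(1)] trancl_into_trancl2[of x y R_graph x]
    unfolding D_def by blast
  have strong: "(x, y) \<in> R_graph\<^sup>+" if "x \<in> D" "y \<in> D" for x y
    using cyclic_reaches_all[of x y] that unfolding D_def by blast
  have acyclic: "(x, x) \<notin> R_graph\<^sup>+" if "x \<in> {..<M} - D" for x using that unfolding D_def by blast
  have D: "D \<subseteq> {..<M}" "D \<noteq> {}" using cyclic unfolding D_def by auto
  note block = block_triangular_numbering[where D = D and n = M and E = R_graph, OF D]
  obtain p m where pm: "p permutes {..<M}" "0 < m" "m \<le> M"
      "\<forall>i j. m \<le> i \<and> i < M \<and> j < m \<longrightarrow> (p i, p j) \<notin> R_graph"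
      "\<forall>i<m. \<forall>j<m. (i, j) \<in> {(a, b). a < m \<and> b < m \<and> (p a, p b) \<in> R_graph}\<^sup>+"
      "\<forall>i j. m \<le> j \<and> j \<le> i \<and> i < M \<longrightarrow> (p i, p j) \<notin> R_graph"
    using block closed strong acyclic by blast
  have p: "p i < M" if "i < M" for i using permutes_in_image[OF pm(1)] that by simp
  have edge: "Rstar1 M A $$ (p i, p j) \<noteq> 0 \<longleftrightarrow> (p i, p j) \<in> R_graph" if "i < M" "j < M" for i j
    using Rstar1_nonneg[OF p[OF that(1)] p[OF that(2)]] p[OF that(1)] p[OF that(2)]
    unfolding pos_graph_Rstar1[symmetric] pos_graph_def by auto
  have pos: "Rstar1 M A $$ (p i, p j) > 0 \<longleftrightarrow> (p i, p j) \<in> R_graph" if "i < M" "j < M" for i j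
    using edge[OF that] Rstar1_nonneg[OF p[OF that(1)] p[OF that(2)]] by linarith
  have "{(a, b). a < m \<and> b < m \<and> Rstar1 M A $$ (p a, p b) > 0} = {(a, b). a < m \<and> b < m \<and> (p a, p b) \<in> R_graph}"
    using pos pm(3) by auto
  hence "irred m (\<lambda>i j. Rstar1 M A $$ (p i, p j))" using pm(5) unfolding irred_def by simp
  moreover have "Rstar1 M A $$ (p i, p j) = 0" if "m \<le> i" "i < M" "j < m" for i j
    using edge[of i j] pm(3,4) that by auto
  moreover have "Rstar1 M A $$ (p i, p j) = 0" if "m \<le> j" "j \<le> i" "i < M" for i j
    using edge[of i j] pm(6) that by auto
  ultimately show ?thesis using pm(1-3) by blast
qed

end

theorem proposition2p4:
  fixes M0 M :: nat
    and A :: "nat \<Rightarrow> real mat" and B :: "nat \<Rightarrow> real mat" and C0 :: "real mat"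
    and pi :: "nat \<Rightarrow> real" and \<theta> :: real
  assumes pos: "0 < M0" "0 < M"
    and dimA: "\<And>k. A k \<in> carrier_mat M M"
    and dimB0: "B 0 \<in> carrier_mat M0 M0"
    and dimB: "\<And>k. 1 \<le> k \<Longrightarrow> B k \<in> carrier_mat M0 M"
    and dimC: "C0 \<in> carrier_mat M M0"
    and nnA: "\<And>k i j. i < M \<Longrightarrow> j < M \<Longrightarrow> 0 \<le> A k $$ (i, j)"
    and nnB0: "\<And>i j. i < M0 \<Longrightarrow> j < M0 \<Longrightarrow> 0 \<le> B 0 $$ (i, j)"
    and nnB: "\<And>k i j. 1 \<le> k \<Longrightarrow> i < M0 \<Longrightarrow> j < M \<Longrightarrow> 0 \<le> B k $$ (i, j)"
    and nnC: "\<And>i j. i < M \<Longrightarrow> j < M0 \<Longrightarrow> 0 \<le> C0 $$ (i, j)"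
    and sumA: "\<And>i j. i < M \<Longrightarrow> j < M \<Longrightarrow> summable (\<lambda>k. A k $$ (i, j))"
    and stochA: "\<And>i. i < M \<Longrightarrow> (\<Sum>j<M. msuminf M A $$ (i, j)) = 1"
    and sumB: "\<And>i j. i < M0 \<Longrightarrow> j < M \<Longrightarrow> summable (\<lambda>k. B (Suc k) $$ (i, j))"
    and stochB: "\<And>i. i < M0 \<Longrightarrow>
       (\<Sum>j<M0. B 0 $$ (i, j)) + (\<Sum>j<M. \<Sum>k. B (Suc k) $$ (i, j)) = 1"
    and stochC: "\<And>i. i < M \<Longrightarrow>
       (\<Sum>j<M0. C0 $$ (i, j)) + (\<Sum>j<M. \<Sum>k. A (Suc k) $$ (i, j)) = 1"
    and piA: "\<And>j. j < M \<Longrightarrow> (\<Sum>i<M. pi i * msuminf M A $$ (i, j)) = pi j"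
    and pie: "(\<Sum>i<M. pi i) = 1"
    and irrT: "irred_T M0 M (Tmat A B C0)"
    and irrA: "irred_mat (msuminf M A)"
    and rho: "(\<Sum>i<M. pi i * (\<Sum>k. real k * (\<Sum>j<M. A k $$ (i, j)))) < 1"
    and rA: "conv_radius_A M A > 1"
    and th1: "1 < \<theta>" and th2: "ereal \<theta> < conv_radius_A M A"
    and thdelta: "complex_of_real \<theta> = delta (map_mat complex_of_real (Astar M A \<theta>))"
  shows "irred_mat (Rstar1 M A) \<or>
         (\<exists>p m. p permutes {..<M} \<and> 0 < m \<and> m \<le> M \<and>
            (\<forall>i j. m \<le> i \<and> i < M \<and> j < m \<longrightarrow> Rstar1 M A $$ (p i, p j) = 0) \<and>
            irred m (\<lambda>i j. Rstar1 M A $$ (p i, p j)) \<and>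
            (\<forall>i j. m \<le> j \<and> j \<le> i \<and> i < M \<longrightarrow> Rstar1 M A $$ (p i, p j) = 0))"
proof -
  have stoch: "(\<Sum>j<M. \<Sum>k. A k $$ (i, j)) = 1" if "i < M" for i
    using stochA[OF that] that unfolding msuminf_def by simp
  interpret mg1 M A using dimA nnA sumA stoch by unfold_locales
  interpret mg1_irreducible M A \<theta>
    using descends_one_of_irred_T[OF irrT pos(1)] th1 summable_power_of_conv_radius_A[OF _ th2] irrA
    by unfold_locales auto
  have "Astar M A \<theta> \<in> carrier_mat M M" unfolding Astar_def msuminf_def by simp
  then obtain v where "v \<in> carrier_vec M" "v \<noteq> 0\<^sub>v M"
    "map_mat complex_of_real (Astar M A \<theta>) *\<^sub>v v = complex_of_real \<theta> \<cdot>\<^sub>v v"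
    using delta_eigenvector_of_real[OF _ pos(2) thdelta] by blast
  from cyclic_phase_exists[OF this piA pie rho] have "\<exists>i<M. (i, i) \<in> R_graph\<^sup>+" .
  from Rstar1_block_form[OF this] show ?thesis by blast
qed

end
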